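(* Let $0\le a\le b\le 1$ and $r\in(0,3)$, and let $X = \mathcal{H}/\Gamma$ be a compact hyperbolic surface with $\mathrm{InjRad}(X) > r$. For any $t \geq \frac1{200}$ and $L \geq 2^{12}t^2$, \[ \mathcal{R}_K(X,t,a,b) = O\!\left(\frac{t^3}{r^4}\exp(-t^2\delta_b^2)\left[e^{-L} + \frac{\mathrm{Vol}_X(X^-(L))}{\mathrm{Vol}_X(X)}\,e^{L}\right]\right), \] where $\delta_b = \max(\frac14-b,0)$ and $X^-(L) = \{z\in X: \mathrm{InjRad}_z(X) < L\}$.
   Context: $\mathcal{H}$ is the hyperbolic upper half-plane with distance $d_{\mathcal H}$ and area measure $\mu_{\mathcal H}$; $X=\mathcal{H}/\Gamma$ with $\Gamma\subset\mathrm{PSL}_2(\mathbb{R})$ a cocompact Fuchsian group, $D$ a fundamental domain, $\mathrm{Vol}_X$ the area on $X$, $\mathrm{InjRad}_z(X)$ the injectivity radius at $z$ and $\mathrm{InjRad}(X)=\inf_z\mathrm{InjRad}_z(X)$. For $0\le a\le b$, $t>0$: $f_t(\lambda) = \frac{t}{\sqrt\pi}\int_a^b e^{-t^2(\lambda-\mu)^2}d\mu$, $h_t(r)=f_t(\frac14+r^2)$, $g_t(u) = \frac1{2\pi}\int_{\mathbb R}h_t(r)e^{iru}dr$, $K_t(\rho) = -\frac{1}{\sqrt2\pi}\int_\rho^\infty\frac{g_t'(u)}{\sqrt{\cosh u-\cosh\rho}}du$, and \[ \mathcal{R}_K(X,t,a,b) = \frac{1}{\mathrm{Vol}_X(X)}\int_D\sum_{\gamma\in\Gamma\setminus\{\mathrm{id}\}}K_t\big(d_{\mathcal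 H}(z,\gamma\cdot z)\big)\,d\mu_{\mathcal H}(z). \] $T_1 = O(T_2)$ means $|T_1|\le CT_2$ with a universal constant $C$. *)

theory Defs
  imports "HOL-Analysis.Analysis"
begin

definition Hplane :: "complex set" where
  "Hplane = {z. 0 < Im z}"

definition hdist :: "complex \<Rightarrow> complex \<Rightarrow> real" where
  "hdist z w = arcosh (1 + (cmod (z - w))\<^sup>2 / (2 * Im z * Im w))"

definition muH :: "complex measure" where
  "muH = density lborel (\<lambda>z. ennreal (indicator Hplane z / (Im z)\<^sup>2))"

text \<open>An element of PSL(2,R), represented by the Moebius map it induces on H
  (identity outside H, so that two elements are equal iff they agree on H,
  and composition of maps is the group product).\<close>
definition hmob :: "real \<Rightarrow> real \<Rightarrow> real \<Rightarrow> real \<Rightarrow> complex \<Rightarrow> complex" where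
  "hmob a b c d = (\<lambda>z. if 0 < Im z then (of_real a * z + of_real b) / (of_real c * z + of_real d) else z)"

definition PSL2 :: "(complex \<Rightarrow> complex) set" where
  "PSL2 = {hmob a b c d | a b c d. a * d - b * c = 1}"

definition subgroup_PSL2 :: "(complex \<Rightarrow> complex) set \<Rightarrow> bool" where
  "subgroup_PSL2 \<Gamma> \<longleftrightarrow> \<Gamma> \<subseteq> PSL2 \<and> id \<in> \<Gamma> \<and>
     (\<forall>\<gamma>\<in>\<Gamma>. \<forall>\<delta>\<in>\<Gamma>. \<gamma> \<circ> \<delta> \<in> \<Gamma>) \<and> (\<forall>\<gamma>\<in>\<Gamma>. \<exists>\<delta>\<in>\<Gamma>. \<gamma> \<circ> \<delta> = id)"

text \<open>Discreteness in PSL(2,R): the identity is isolated, i.e. every matrix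
  representative of a non-identity element stays uniformly away from I.\<close>
definition fuchsian :: "(complex \<Rightarrow> complex) set \<Rightarrow> bool" where
  "fuchsian \<Gamma> \<longleftrightarrow> subgroup_PSL2 \<Gamma> \<and>
     (\<exists>\<epsilon>>0. \<forall>\<gamma>\<in>\<Gamma> - {id}. \<forall>a b c d. a * d - b * c = 1 \<and> \<gamma> = hmob a b c d \<longrightarrow>
        \<epsilon> \<le> \<bar>a - 1\<bar> + \<bar>b\<bar> + \<bar>c\<bar> + \<bar>d - 1\<bar>)"

text \<open>Cocompact: the quotient H/Gamma is compact, i.e. some compact subset of H
  maps onto it.\<close>
definition cocompact :: "(complex \<Rightarrow> complex) set \<Rightarrow> bool" where
  "cocompact \<Gamma> \<longleftrightarrow> (\<exists>K. compact K \<and> K \<subseteq> Hplane \<and> Hplane \<subseteq> (\<Union>\<gamma>\<in>\<Gamma>. \<gamma> ` K))"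

definition fundamental_domain :: "(complex \<Rightarrow> complex) set \<Rightarrow> complex set \<Rightarrow> bool" where
  "fundamental_domain \<Gamma> D \<longleftrightarrow> D \<in> sets borel \<and> D \<subseteq> Hplane \<and>
     (\<Union>\<gamma>\<in>\<Gamma>. \<gamma> ` D) = Hplane \<and>
     (\<forall>\<gamma>\<in>\<Gamma> - {id}. emeasure muH (D \<inter> \<gamma> ` D) = 0)"

definition injrad_at :: "(complex \<Rightarrow> complex) set \<Rightarrow> complex \<Rightarrow> real" where
  "injrad_at \<Gamma> z = (INF \<gamma>\<in>\<Gamma> - {id}. hdist z (\<gamma> z)) / 2"

definition injrad :: "(complex \<Rightarrow> complex) set \<Rightarrow> real" where
  "injrad \<Gamma> = (INF z\<in>Hplane. injrad_at \<Gamma> z)"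

text \<open>Vol_X(X), computed on a fundamental domain.\<close>
definition volX :: "complex set \<Rightarrow> real" where
  "volX D = measure muH D"

text \<open>Vol_X(X^-(L)), X^-(L) = {z. InjRad_z(X) < L}, computed on a fundamental domain.\<close>
definition vol_thin :: "(complex \<Rightarrow> complex) set \<Rightarrow> complex set \<Rightarrow> real \<Rightarrow> real" where
  "vol_thin \<Gamma> D L = measure muH {z\<in>D. injrad_at \<Gamma> z < L}"

definition f_t :: "real \<Rightarrow> real \<Rightarrow> real \<Rightarrow> real \<Rightarrow> real" where
  "f_t a b t lam = t / sqrt pi * (LBINT m=a..b. exp (- (t\<^sup>2 * (lam - m)\<^sup>2)))"

definition h_t :: "real \<Rightarrow> real \<Rightarrow> real \<Rightarrow> real \<Rightarrow> real" where
  "h_t a b t r = f_t a b t (1/4 + r\<^sup>2)"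

definition g_t :: "real \<Rightarrow> real \<Rightarrow> real \<Rightarrow> real \<Rightarrow> complex" where
  "g_t a b t u = complex_of_real (1 / (2 * pi)) *
     (LINT r|lborel. complex_of_real (h_t a b t r) * exp (\<i> * complex_of_real (r * u)))"

definition K_t :: "real \<Rightarrow> real \<Rightarrow> real \<Rightarrow> real \<Rightarrow> complex" where
  "K_t a b t \<rho> = - complex_of_real (1 / (sqrt 2 * pi)) *
     (LINT u:{\<rho><..}|lborel. vector_derivative (g_t a b t) (at u) /
        complex_of_real (sqrt (cosh u - cosh \<rho>)))"

definition R_K :: "(complex \<Rightarrow> complex) set \<Rightarrow> complex set \<Rightarrow> real \<Rightarrow> real \<Rightarrow> real \<Rightarrow> complex" where
  "R_K \<Gamma> D t a b = complex_of_real (1 / volX D) *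
     (LINT z:D|muH. infsum (\<lambda>\<gamma>. K_t a b t (hdist z (\<gamma> z))) (\<Gamma> - {id}))"

end

(*
  The kernel K_t decays like exp (- 3 * rho) / sqrt rho.  Indeed h_t extends to an entire
  function whose quartic Gaussian decay persists on the strip |Im w| <= 3, so the Fourier
  integral g_t may be shifted to the line Im w = 3; this yields |g_t'(u)| <= C(t) exp (- 3 * u),
  and the Abel transform defining K_t inherits the decay.

  Since InjRad(X) > r, the orbit of z is 2r-separated, and a logarithmic grid around z shows
  that at most O(exp (2 * R) * (R + 1) / r^2) orbit points lie within distance R of z.  Summing
  exp (- 3 * d) over the orbit therefore gives O(C(t) exp (- 3 * m / 4) / r^3), where m is the
  least displacement of z: m >= 2L on the thick part of a fundamental domain and m >= 2r on
  the thin part.  Integrating over the fundamental domain and using L >= 2^12 t^2 to absorb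
  C(t) = exp (O(t^2)) into exp (- L) gives the claim.
*)
theory Submission
  imports Defs "HOL-Complex_Analysis.Complex_Analysis"
begin

section \<open>Shifting integrals into a horizontal strip\<close>

lemma nn_integral_exp_neg_abs: "(\<integral>\<^sup>+x. ennreal (exp (- \<bar>x\<bar>)) \<partial>lborel) = 2"
proof -
  have right: "(\<integral>\<^sup>+x. ennreal (indicator {0..} x * exp (- x)) \<partial>lborel) = 1"
    using nn_integral_has_integral_lebesgue[OF _ has_integral_exp_minus_to_infinity[of 1 0]] by simp
  have "(\<integral>\<^sup>+x. ennreal (exp (- \<bar>x\<bar>)) \<partial>lborel) =
      (\<integral>\<^sup>+x. ennreal (indicator {0..} x * exp (- x)) + ennreal (indicator {0<..} (- x) * exp (- (- x))) \<partial>lborel)"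
    by (intro nn_integral_cong) (auto simp: indicator_def)
  also have "\<dots> = (\<integral>\<^sup>+x. ennreal (indicator {0..} x * exp (- x)) \<partial>lborel) +
      (\<integral>\<^sup>+x. ennreal (indicator {0<..} (- x) * exp (- (- x))) \<partial>lborel)"
    by (intro nn_integral_add) auto
  also have "(\<integral>\<^sup>+x. ennreal (indicator {0<..} (- x) * exp (- (- x))) \<partial>lborel) =
      (\<integral>\<^sup>+x. ennreal (indicator {0<..} x * exp (- x)) \<partial>lborel)"
    using nn_integral_real_affine[of "\<lambda>x. ennreal (indicator {0<..} x * exp (- x))" "-1" 0] by simp
  also have "\<dots> = (\<integral>\<^sup>+x. ennreal (indicator {0..} x * exp (- x)) \<partial>lborel)"
    by (intro nn_integral_cong_AE) (auto intro!: AE_I[where N="{0}"] simp: indicator_def)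
  finally show ?thesis
    unfolding right by simp
qed

lemma integrable_exp_neg_abs: "integrable lborel (\<lambda>x::real. exp (- \<bar>x\<bar>))"
  by (intro integrableI_bounded) (auto simp: nn_integral_exp_neg_abs)

lemma integral_exp_neg_abs: "(LINT x|lborel. exp (- \<bar>x::real\<bar>)) = 2"
  using nn_integral_exp_neg_abs by (subst integral_eq_nn_integral) auto

lemma integrable_exp_decay:
  fixes f :: "real \<Rightarrow> 'a::{banach, second_countable_topology}"
  assumes "continuous_on UNIV f" "\<And>x. norm (f x) \<le> C * exp (- \<bar>x\<bar>)"
  shows "integrable lborel f"
proof (rule Bochner_Integration.integrable_bound)
  show "integrable lborel (\<lambda>x. C * exp (- \<bar>x\<bar>))"
    using integrable_exp_neg_abs by simp
  show "f \<in> borel_measurable lborel"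
    using assms(1) by (simp add: borel_measurable_continuous_onI)
  show "AE x in lborel. norm (f x) \<le> norm (C * exp (- \<bar>x\<bar>))"
    using assms(2) by (auto intro: order_trans[OF _ abs_ge_self])
qed

lemma norm_integral_exp_decay_le:
  fixes f :: "real \<Rightarrow> 'a::{banach, second_countable_topology}"
  assumes "continuous_on UNIV f" "\<And>x. norm (f x) \<le> C * exp (- \<bar>x\<bar>)"
  shows "norm (LINT x|lborel. f x) \<le> 2 * C"
proof -
  have "norm (LINT x|lborel. f x) \<le> (LINT x|lborel. norm (f x))"
    by (rule integral_norm_bound)
  also have "\<dots> \<le> (LINT x|lborel. C * exp (- \<bar>x\<bar>))"
    by (intro integral_mono integrable_norm integrable_exp_decay[OF assms])
       (use assms(2) integrable_exp_neg_abs in auto)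
  also have "\<dots> = 2 * C"
    using integral_exp_neg_abs by simp
  finally show ?thesis .
qed

lemma contour_integral_linepath_horizontal:
  fixes f :: "complex \<Rightarrow> complex"
  assumes "a < b"
  shows "contour_integral (linepath (Complex a c) (Complex b c)) f = integral {a..b} (\<lambda>x. f (Complex x c))"
proof -
  have "contour_integral (linepath (Complex a c) (Complex b c)) f =
        contour_integral (linepath (of_real a) (of_real b)) (\<lambda>w. f (w + \<i> * of_real c))"
    unfolding contour_integral_integral
    by (intro integral_cong) (simp add: linepath_def Complex_eq scaleR_conv_of_real algebra_simps)
  also have "\<dots> = integral {a..b} (\<lambda>x. f (Complex x c))"
    using assms by (subst contour_integral_linepath_Reals_eq) (auto simp: Complex_eq)
  finally show ?thesis .
qed

lemma rectangle_integral_eq_0: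
  fixes F :: "complex \<Rightarrow> complex"
  assumes holo: "F holomorphic_on UNIV" and "R > 0" "s > 0"
  shows "integral {-R..R} (\<lambda>x. F (of_real x)) + \<i> * integral {0..s} (\<lambda>y. F (Complex R y))
       - integral {-R..R} (\<lambda>x. F (Complex x s)) - \<i> * integral {0..s} (\<lambda>y. F (Complex (-R) y)) = 0"
proof -
  have "continuous_on UNIV F"
    using holo holomorphic_on_imp_continuous_on by blast
  then have integrable: "F contour_integrable_on linepath p q" for p q
    by (intro contour_integrable_continuous_linepath) (auto intro: continuous_on_subset)
  define a1 a2 a3 a4 where "a1 = Complex (-R) 0" "a2 = Complex R 0" "a3 = Complex R s" "a4 = Complex (-R) s"
  have "(F has_contour_integral 0) (rectpath a1 a3)"
    by (rule Cauchy_theorem_convex_simple[OF holo]) auto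
  moreover have "rectpath a1 a3 = linepath a1 a2 +++ linepath a2 a3 +++ linepath a3 a4 +++ linepath a4 a1"
    by (simp add: rectpath_def a1_a2_a3_a4_def Let_def)
  ultimately have "contour_integral (linepath a1 a2) F + contour_integral (linepath a2 a3) F
     + contour_integral (linepath a3 a4) F + contour_integral (linepath a4 a1) F = 0"
    using contour_integral_unique by (fastforce simp: integrable valid_path_join add.assoc)
  moreover have "contour_integral (linepath a1 a2) F = integral {-R..R} (\<lambda>x. F (of_real x))"
    using contour_integral_linepath_horizontal[of "-R" R 0 F] assms
    by (simp add: a1_a2_a3_a4_def complex_of_real_def)
  moreover have "contour_integral (linepath a3 a4) F = - integral {-R..R} (\<lambda>x. F (Complex x s))"
    using contour_integral_reversepath[of "linepath a4 a3" F] contour_integral_linepath_horizontal[of "-R" R s F] assms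
    by (simp add: a1_a2_a3_a4_def)
  moreover have "contour_integral (linepath a2 a3) F = \<i> * integral {0..s} (\<lambda>y. F (Complex R y))"
    using assms by (simp add: a1_a2_a3_a4_def contour_integral_linepath_same_Re)
  moreover have "contour_integral (linepath a4 a1) F = - (\<i> * integral {0..s} (\<lambda>y. F (Complex (-R) y)))"
    using contour_integral_reversepath[of "linepath a1 a4" F] assms
    by (simp add: a1_a2_a3_a4_def contour_integral_linepath_same_Re)
  ultimately show ?thesis
    by (simp add: algebra_simps)
qed

lemma tendsto_integral_symmetric_interval:
  fixes f :: "real \<Rightarrow> 'a::euclidean_space"
  assumes f: "integrable lborel f"
  shows "(\<lambda>n. integral {-real n..real n} f) \<longlonglongrightarrow> integral\<^sup>L lborel f"
proof -
  have eq: "integral {-real n..real n} f = (LINT x|lborel. indicator {-real n..real n} x *\<^sub>R f x)" for n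
  proof -
    have "set_integrable lborel {-real n..real n} f"
      unfolding set_integrable_def by (rule integrable_mult_indicator) (use f in auto)
    from set_borel_integral_eq_integral(2)[OF this] show ?thesis
      by (simp add: set_lebesgue_integral_def)
  qed
  have "(\<lambda>n. LINT x|lborel. indicator {-real n..real n} x *\<^sub>R f x) \<longlonglongrightarrow> integral\<^sup>L lborel f"
  proof (rule integral_dominated_convergence[where w="\<lambda>x. norm (f x)"])
    show "AE x in lborel. (\<lambda>n. indicator {-real n..real n} x *\<^sub>R f x) \<longlonglongrightarrow> f x"
    proof (intro AE_I2 tendsto_eventually)
      fix x :: real
      obtain N :: nat where "\<bar>x\<bar> \<le> real N"
        using real_arch_simple by blast
      then show "\<forall>\<^sub>F n in sequentially. indicator {-real n..real n} x *\<^sub>R f x = f x"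
        unfolding eventually_sequentially by (intro exI[of _ N]) (auto simp: indicator_def)
    qed
  qed (use f in \<open>auto simp: indicator_def\<close>)
  then show ?thesis
    unfolding eq .
qed

text \<open>Cauchy's theorem on the rectangles with corners \<open>-n\<close> and \<open>n + \<i> * s\<close>: the vertical
  sides vanish in the limit because of the uniform exponential decay in the strip.\<close>
lemma integral_lborel_shift_into_strip:
  fixes F :: "complex \<Rightarrow> complex"
  assumes holo: "F holomorphic_on UNIV" and s: "s > 0"
    and decay: "\<And>x y. 0 \<le> y \<Longrightarrow> y \<le> s \<Longrightarrow> cmod (F (Complex x y)) \<le> C * exp (- \<bar>x\<bar>)"
  shows "(LINT x|lborel. F (of_real x)) = (LINT x|lborel. F (Complex x s))"
proof -
  have cont: "continuous_on UNIV F"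
    using holo holomorphic_on_imp_continuous_on by blast
  have cont_line: "continuous_on UNIV (\<lambda>x. F (Complex x c))" "continuous_on UNIV (\<lambda>y. F (Complex c y))" for c
    by (rule continuous_on_compose2[OF cont]; auto intro!: continuous_intros)+
  define A where "A = (\<lambda>n::nat. integral {-real n..real n} (\<lambda>x. F (Complex x 0)))"
  define B where "B = (\<lambda>n::nat. integral {-real n..real n} (\<lambda>x. F (Complex x s)))"
  have "A \<longlonglongrightarrow> (LINT x|lborel. F (Complex x 0))" "B \<longlonglongrightarrow> (LINT x|lborel. F (Complex x s))"
    unfolding A_def B_def using s
    by (auto intro!: tendsto_integral_symmetric_interval integrable_exp_decay cont_line decay)
  then have lim: "(\<lambda>n. A n - B n) \<longlonglongrightarrow> (LINT x|lborel. F (Complex x 0)) - (LINT x|lborel. F (Complex x s))"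
    by (intro tendsto_diff)
  have side: "cmod (integral {0..s} (\<lambda>y. F (Complex c y))) \<le> C * exp (- \<bar>c\<bar>) * (s - 0)" for c
    by (rule integral_bound) (use s decay continuous_on_subset[OF cont_line(2)] in auto)
  have bound: "norm (A n - B n) \<le> 2 * s * C * exp (- real n)" if "n > 0" for n
  proof -
    have "A n - B n = \<i> * (integral {0..s} (\<lambda>y. F (Complex (-real n) y)) - integral {0..s} (\<lambda>y. F (Complex (real n) y)))"
      using rectangle_integral_eq_0[OF holo _ s, of "real n"] that
      unfolding A_def B_def by (simp add: algebra_simps complex_of_real_def)
    then have "norm (A n - B n) \<le> cmod (integral {0..s} (\<lambda>y. F (Complex (-real n) y)))
        + cmod (integral {0..s} (\<lambda>y. F (Complex (real n) y)))"
      by (simp add: norm_mult norm_triangle_ineq4)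
    then show ?thesis
      using side[of "-real n"] side[of "real n"] by (simp add: algebra_simps)
  qed
  have "(\<lambda>n. 2 * s * C * exp (- real n)) \<longlonglongrightarrow> 0"
    by (intro tendsto_mult_right_zero filterlim_compose[OF exp_at_bot])
       (simp add: filterlim_uminus_at_bot filterlim_real_sequentially)
  then have "(\<lambda>n. A n - B n) \<longlonglongrightarrow> 0"
  proof (rule Lim_null_comparison[rotated])
    show "\<forall>\<^sub>F n in sequentially. norm (A n - B n) \<le> 2 * s * C * exp (- real n)"
      unfolding eventually_sequentially using bound by (intro exI[of _ 1]) auto
  qed
  from LIMSEQ_unique[OF lim this]
  have "(LINT x|lborel. F (Complex x 0)) = (LINT x|lborel. F (Complex x s))"
    by simp
  then show ?thesis
    by (simp add: complex_of_real_def)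
qed

section \<open>Differentiating Fourier integrals\<close>

lemma norm_exp_i_minus_1_le: "cmod (exp (\<i> * of_real x) - 1) \<le> \<bar>x\<bar>"
proof -
  have "(cos x - 1)\<^sup>2 + (sin x)\<^sup>2 = 4 * (sin (x/2))\<^sup>2"
    using sin_cos_squared_add[of x] cos_double_sin[of "x/2"]
    by (simp add: power2_eq_square algebra_simps)
  also have "\<dots> \<le> x\<^sup>2"
    using abs_sin_x_le_abs_x[of "x/2"] abs_le_square_iff[of "sin (x/2)" "x/2"]
    by (simp add: power2_eq_square)
  finally have "sqrt ((cos x - 1)\<^sup>2 + (sin x)\<^sup>2) \<le> \<bar>x\<bar>"
    using real_sqrt_le_mono by fastforce
  moreover have "exp (\<i> * of_real x) - 1 = Complex (cos x - 1) (sin x)"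
    by (simp add: cis_conv_exp[symmetric] cis.ctr Complex_eq)
  ultimately show ?thesis
    by (simp add: cmod_def)
qed

lemma has_vector_derivative_if_quotient_tendsto:
  fixes f :: "real \<Rightarrow> 'a::real_normed_vector"
  assumes "((\<lambda>h. (f (x + h) - f x) /\<^sub>R h) \<longlongrightarrow> D) (at 0)"
  shows "(f has_vector_derivative D) (at x)"
  unfolding has_vector_derivative_def has_derivative_at
proof (intro conjI bounded_linear_scaleR_left)
  have "\<forall>\<^sub>F h in at 0. norm ((f (x + h) - f x) /\<^sub>R h - D) = norm (f (x + h) - f x - h *\<^sub>R D) / norm h"
  proof (rule eventually_at_filter[THEN iffD2, OF always_eventually], intro allI impI)
    fix h :: real
    assume "h \<noteq> 0"
    then have "(f (x + h) - f x) /\<^sub>R h - D = (f (x + h) - f x - h *\<^sub>R D) /\<^sub>R h"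
      by (simp add: algebra_simps)
    then show "norm ((f (x + h) - f x) /\<^sub>R h - D) = norm (f (x + h) - f x - h *\<^sub>R D) / norm h"
      by (simp add: divide_inverse_commute)
  qed
  moreover have "((\<lambda>h. norm ((f (x + h) - f x) /\<^sub>R h - D)) \<longlongrightarrow> 0) (at 0)"
    using assms by (simp add: tendsto_norm_zero_iff LIM_zero_iff)
  ultimately show "((\<lambda>h. norm (f (x + h) - f x - h *\<^sub>R D) / norm h) \<longlongrightarrow> 0) (at 0)"
    by (rule Lim_transform_eventually[rotated])
qed

lemma exp_double_decay_le:
  fixes x y :: real
  assumes "0 \<le> y" "y \<le> C * exp (- 2 * \<bar>x\<bar>)"
  shows "y \<le> C * exp (- \<bar>x\<bar>)" "\<bar>x\<bar> * y \<le> C * exp (- \<bar>x\<bar>)"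
proof -
  have "C \<ge> 0"
    using assms by (smt (verit) exp_gt_zero zero_le_mult_iff)
  then show "y \<le> C * exp (- \<bar>x\<bar>)"
    using assms(2) by (smt (verit) exp_le_cancel_iff mult_left_mono)
  have "\<bar>x\<bar> \<le> exp \<bar>x\<bar>"
    using exp_ge_add_one_self[of "\<bar>x\<bar>"] by linarith
  then have "\<bar>x\<bar> * y \<le> exp \<bar>x\<bar> * (C * exp (- 2 * \<bar>x\<bar>))"
    using assms by (intro mult_mono) auto
  also have "\<dots> = C * exp (- \<bar>x\<bar>)"
    by (simp add: mult_ac flip: exp_add)
  finally show "\<bar>x\<bar> * y \<le> C * exp (- \<bar>x\<bar>)" .
qed

lemma tendsto_exp_i_quotient_sequentially:
  assumes "\<And>i. X i \<noteq> 0" "X \<longlonglongrightarrow> 0"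
  shows "(\<lambda>i. (exp (\<i> * of_real (x * X i)) - 1) / of_real (X i)) \<longlonglongrightarrow> \<i> * of_real x"
proof -
  have "((\<lambda>w. exp (\<i> * of_real x * w)) has_field_derivative \<i> * of_real x) (at 0)"
    by (auto intro!: derivative_eq_intros)
  then have "((\<lambda>w. (exp (\<i> * of_real x * w) - 1) / w) \<longlongrightarrow> \<i> * of_real x) (at 0)"
    by (simp add: DERIV_def)
  from tendsto_at_iff_sequentially[THEN iffD1, OF this, rule_format, of "\<lambda>i. of_real (X i)"]
  have "(\<lambda>i. (exp (\<i> * of_real x * of_real (X i)) - 1) / of_real (X i)) \<longlonglongrightarrow> \<i> * of_real x"
    using assms tendsto_of_real[OF assms(2)] by (simp add: comp_def)
  then show ?thesis
    by (simp add: mult.assoc)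
qed

text \<open>Dominated convergence: by \<open>cmod (exp (\<i> * y) - 1) \<le> \<bar>y\<bar>\<close> the difference quotients
  of the integrand are dominated by \<open>\<bar>x\<bar> * cmod (\<psi> x)\<close>.\<close>
lemma tendsto_fourier_difference_quotient:
  fixes \<psi> :: "real \<Rightarrow> complex"
  assumes cont: "continuous_on UNIV \<psi>" and decay: "\<And>x. \<bar>x\<bar> * cmod (\<psi> x) \<le> C * exp (- \<bar>x\<bar>)"
  shows "((\<lambda>h. LINT x|lborel. \<psi> x * exp (\<i> * of_real (x * u)) * ((exp (\<i> * of_real (x * h)) - 1) / of_real h))
          \<longlongrightarrow> (LINT x|lborel. \<i> * of_real x * \<psi> x * exp (\<i> * of_real (x * u)))) (at 0)"
  unfolding tendsto_at_iff_sequentially comp_def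
proof (intro allI impI)
  fix X :: "nat \<Rightarrow> real"
  assume X0: "\<forall>i. X i \<in> UNIV - {0}" and X: "X \<longlonglongrightarrow> 0"
  define q where "q = (\<lambda>h x. \<psi> x * exp (\<i> * of_real (x * u)) * ((exp (\<i> * of_real (x * h)) - 1) / of_real h))"
  show "(\<lambda>i. LINT x|lborel. q (X i) x) \<longlonglongrightarrow> (LINT x|lborel. \<i> * of_real x * \<psi> x * exp (\<i> * of_real (x * u)))"
  proof (rule integral_dominated_convergence[where w="\<lambda>x. C * exp (- \<bar>x\<bar>)"])
    show "(\<lambda>x. \<i> * of_real x * \<psi> x * exp (\<i> * of_real (x * u))) \<in> borel_measurable lborel"
      "q (X i) \<in> borel_measurable lborel" for i
      unfolding q_def using X0 by (auto intro!: borel_measurable_continuous_onI continuous_intros cont)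
    show "integrable lborel (\<lambda>x. C * exp (- \<bar>x\<bar>))"
      using integrable_exp_neg_abs by simp
    show "AE x in lborel. (\<lambda>i. q (X i) x) \<longlonglongrightarrow> \<i> * of_real x * \<psi> x * exp (\<i> * of_real (x * u))"
    proof (intro AE_I2)
      fix x :: real
      have "(\<lambda>i. \<psi> x * exp (\<i> * of_real (x * u)) * ((exp (\<i> * of_real (x * X i)) - 1) / of_real (X i)))
          \<longlonglongrightarrow> \<psi> x * exp (\<i> * of_real (x * u)) * (\<i> * of_real x)"
        using X0 X by (intro tendsto_intros tendsto_exp_i_quotient_sequentially) auto
      then show "(\<lambda>i. q (X i) x) \<longlonglongrightarrow> \<i> * of_real x * \<psi> x * exp (\<i> * of_real (x * u))"
        by (simp add: q_def algebra_simps)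
    qed
    show "AE x in lborel. norm (q (X i) x) \<le> C * exp (- \<bar>x\<bar>)" for i
    proof (intro AE_I2)
      fix x
      have "norm ((exp (\<i> * of_real (x * X i)) - 1) / of_real (X i)) \<le> \<bar>x\<bar>"
        using norm_exp_i_minus_1_le[of "x * X i"] X0 by (simp add: norm_divide abs_mult divide_le_eq)
      then have "norm (q (X i) x) \<le> cmod (\<psi> x) * \<bar>x\<bar>"
        unfolding q_def norm_mult norm_exp_i_times by (simp add: mult_left_mono)
      then show "norm (q (X i) x) \<le> C * exp (- \<bar>x\<bar>)"
        using decay[of x] by (simp add: mult.commute)
    qed
  qed
qed

lemma has_vector_derivative_fourier_integral:
  fixes \<psi> :: "real \<Rightarrow> complex"
  assumes cont: "continuous_on UNIV \<psi>" and decay: "\<And>x. cmod (\<psi> x) \<le> C * exp (- 2 * \<bar>x\<bar>)"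
  shows "((\<lambda>u. LINT x|lborel. \<psi> x * exp (\<i> * of_real (x * u))) has_vector_derivative
          (LINT x|lborel. \<i> * of_real x * \<psi> x * exp (\<i> * of_real (x * u)))) (at u)"
proof (rule has_vector_derivative_if_quotient_tendsto)
  note decay' = exp_double_decay_le[OF norm_ge_zero decay]
  have integrable: "integrable lborel (\<lambda>x. \<psi> x * exp (\<i> * of_real (x * v)))" for v
    by (intro integrable_exp_decay[where C=C]) (auto intro!: continuous_intros cont decay'(1) simp: norm_mult)
  note limit = tendsto_fourier_difference_quotient[OF cont decay'(2), of u]
  have "((LINT x|lborel. \<psi> x * exp (\<i> * of_real (x * (u + h)))) - (LINT x|lborel. \<psi> x * exp (\<i> * of_real (x * u)))) /\<^sub>R h
      = (LINT x|lborel. \<psi> x * exp (\<i> * of_real (x * u)) * ((exp (\<i> * of_real (x * h)) - 1) / of_real h))" for h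
  proof -
    have "(LINT x|lborel. \<psi> x * exp (\<i> * of_real (x * (u + h)))) - (LINT x|lborel. \<psi> x * exp (\<i> * of_real (x * u)))
        = (LINT x|lborel. \<psi> x * exp (\<i> * of_real (x * u)) * (exp (\<i> * of_real (x * h)) - 1))"
      unfolding Bochner_Integration.integral_diff[OF integrable integrable, symmetric]
      by (intro Bochner_Integration.integral_cong refl) (simp add: algebra_simps flip: exp_add)
    then show ?thesis
      unfolding times_divide_eq_right integral_divide_zero
      by (simp add: scaleR_conv_of_real divide_inverse_commute)
  qed
  with limit show "((\<lambda>h. ((LINT x|lborel. \<psi> x * exp (\<i> * of_real (x * (u + h))))
      - (LINT x|lborel. \<psi> x * exp (\<i> * of_real (x * u)))) /\<^sub>R h)
      \<longlongrightarrow> (LINT x|lborel. \<i> * of_real x * \<psi> x * exp (\<i> * of_real (x * u)))) (at 0)"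
    by simp
qed

lemma norm_fourier_integrals_le:
  fixes \<psi> :: "real \<Rightarrow> complex"
  assumes cont: "continuous_on UNIV \<psi>" and decay: "\<And>x. cmod (\<psi> x) \<le> C * exp (- 2 * \<bar>x\<bar>)"
  shows "cmod (LINT x|lborel. \<psi> x * exp (\<i> * of_real (x * u))) \<le> 2 * C"
    and "cmod (LINT x|lborel. \<i> * of_real x * \<psi> x * exp (\<i> * of_real (x * u))) \<le> 2 * C"
  using exp_double_decay_le[OF norm_ge_zero decay]
  by (auto intro!: norm_integral_exp_decay_le continuous_intros cont simp: norm_mult)

section \<open>Decay of the kernel\<close>

text \<open>The entire extension of \<open>h_t\<close>, which allows the Fourier integral defining \<open>g_t\<close>
  to be moved off the real line.\<close>
definition h_ext :: "real \<Rightarrow> real \<Rightarrow> real \<Rightarrow> complex \<Rightarrow> complex" where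
  "h_ext a b t w = of_real (t / sqrt pi) *
     integral {a..b} (\<lambda>m. exp (- (of_real (t\<^sup>2) * (1/4 + w\<^sup>2 - of_real m)\<^sup>2)))"

lemma h_ext_of_real:
  assumes "a \<le> b"
  shows "h_ext a b t (of_real x) = of_real (h_t a b t x)"
proof -
  define g where "g = (\<lambda>m::real. exp (- (t\<^sup>2 * (1/4 + x\<^sup>2 - m)\<^sup>2)))"
  have cont: "continuous_on {a..b} g"
    unfolding g_def by (auto intro!: continuous_intros)
  then have "set_integrable lborel {a..b} g"
    unfolding set_integrable_def by (rule borel_integrable_compact[OF compact_Icc])
  then have "(LBINT m=a..b. g m) = integral {a..b} g"
    using assms by (simp add: interval_integral_Icc set_borel_integral_eq_integral)
  moreover have "((\<lambda>m. of_real (g m) :: complex) has_integral of_real (integral {a..b} g)) {a..b}"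
    using integrable_continuous_interval[OF cont] by (intro has_integral_of_real) (simp add: has_integral_integral)
  moreover have "(\<lambda>m. of_real (g m) :: complex) = (\<lambda>m. exp (- (of_real (t\<^sup>2) * (1/4 + (of_real x)\<^sup>2 - of_real m)\<^sup>2)))"
    unfolding g_def by (auto simp flip: exp_of_real)
  ultimately show ?thesis
    unfolding h_ext_def h_t_def f_t_def g_def by (simp add: integral_unique)
qed

lemma holomorphic_h_ext: "h_ext a b t holomorphic_on UNIV"
proof -
  define f where "f = (\<lambda>(w::complex) m. exp (- (of_real (t\<^sup>2) * (1/4 + w\<^sup>2 - of_real (m::real))\<^sup>2)))"
  define fw where "fw = (\<lambda>(w::complex) m. exp (- (of_real (t\<^sup>2) * (1/4 + w\<^sup>2 - of_real (m::real))\<^sup>2)) *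
        (- (of_real (t\<^sup>2) * (2 * (1/4 + w\<^sup>2 - of_real m) * (2 * w)))))"
  have "(\<lambda>w. integral (cbox a b) (f w)) holomorphic_on UNIV"
  proof (rule leibniz_rule_holomorphic[where fx=fw])
    show "((\<lambda>w. f w m) has_field_derivative fw w m) (at w within UNIV)" for w m
      unfolding f_def fw_def by (auto intro!: derivative_eq_intros simp: power2_eq_square)
    show "f w integrable_on cbox a b" for w
      unfolding f_def by (intro integrable_continuous) (auto intro!: continuous_intros)
    show "continuous_on (UNIV \<times> cbox a b) (\<lambda>(w, m). fw w m)"
      unfolding fw_def by (auto intro!: continuous_intros simp: case_prod_unfold)
  qed auto
  then show ?thesis
    unfolding h_ext_def f_def by (auto intro!: holomorphic_intros)
qed

text \<open>On the strip \<open>\<bar>Im w\<bar> \<le> 3\<close> the real part of the exponent is still dominated by the quartic term.\<close>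
lemma norm_h_ext_le:
  assumes "0 \<le> a" "a \<le> b" "b \<le> 1" "0 \<le> t" "\<bar>Im w\<bar> \<le> 3"
  shows "cmod (h_ext a b t w) \<le> t * exp (- (t\<^sup>2 * ((Re w)^4 - 111/2 * (Re w)\<^sup>2)))"
proof -
  define x y where "x = Re w" and "y = Im w"
  define B where "B = exp (- (t\<^sup>2 * (x^4 - 111/2 * x\<^sup>2)))"
  have "y\<^sup>2 \<le> 9"
    using assms(5) abs_le_square_iff[of y 3] by (simp add: y_def)
  have integrand: "cmod (exp (- (of_real (t\<^sup>2) * (1/4 + w\<^sup>2 - of_real m)\<^sup>2))) \<le> B" if "m \<in> {a..b}" for m
  proof -
    have "Re ((1/4 + w\<^sup>2 - of_real m)\<^sup>2) = (1/4 + x\<^sup>2 - y\<^sup>2 - m)\<^sup>2 - (2 * x * y)\<^sup>2"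
      unfolding x_def y_def by (simp add: power2_eq_square field_simps)
    moreover have "(1/4 + x\<^sup>2 - y\<^sup>2 - m)\<^sup>2 - (2 * x * y)\<^sup>2 - (x^4 - 111/2 * x\<^sup>2)
        = (1/4 - y\<^sup>2 - m)\<^sup>2 + x\<^sup>2 * (56 - 6 * y\<^sup>2 - 2 * m)"
      by (simp add: power2_eq_square power4_eq_xxxx algebra_simps)
    moreover have "0 \<le> x\<^sup>2 * (56 - 6 * y\<^sup>2 - 2 * m)"
      using \<open>y\<^sup>2 \<le> 9\<close> that assms by (intro mult_nonneg_nonneg) auto
    ultimately have "x^4 - 111/2 * x\<^sup>2 \<le> Re ((1/4 + w\<^sup>2 - of_real m)\<^sup>2)"
      by (smt (verit) zero_le_power2)
    then show ?thesis
      unfolding B_def by (simp add: mult_left_mono)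
  qed
  have "cmod (integral {a..b} (\<lambda>m. exp (- (of_real (t\<^sup>2) * (1/4 + w\<^sup>2 - of_real m)\<^sup>2)))) \<le> B * (b - a)"
    by (rule integral_bound) (use assms integrand in \<open>auto intro!: continuous_intros\<close>)
  also have "\<dots> \<le> B"
    using assms unfolding B_def by (simp add: mult_left_le)
  finally have "cmod (integral {a..b} (\<lambda>m. exp (- (of_real (t\<^sup>2) * (1/4 + w\<^sup>2 - of_real m)\<^sup>2)))) \<le> B" .
  moreover have "t / sqrt pi \<le> t / 1"
    by (rule divide_left_mono) (use assms pi_gt3 in auto)
  ultimately have "t / sqrt pi * cmod (integral {a..b} (\<lambda>m. exp (- (of_real (t\<^sup>2) * (1/4 + w\<^sup>2 - of_real m)\<^sup>2)))) \<le> t * B"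
    using assms by (intro mult_mono) (auto simp: B_def)
  then show ?thesis
    unfolding h_ext_def norm_mult norm_of_real B_def x_def using assms by simp
qed

definition strip_const :: "real \<Rightarrow> real" where
  "strip_const t = t * exp ((111/2)\<^sup>2 * t\<^sup>2 / 2 + 1 / (2 * t\<^sup>2) + 1)"

lemma strip_const_pos: "t > 0 \<Longrightarrow> strip_const t > 0"
  unfolding strip_const_def by simp

lemma quartic_ge_linear:
  fixes x t :: real
  assumes "t > 0"
  shows "2 * \<bar>x\<bar> - (111/2)\<^sup>2 * t\<^sup>2 / 2 - 1 / (2 * t\<^sup>2) - 1 \<le> t\<^sup>2 * (x^4 - 111/2 * x\<^sup>2)"
proof -
  have "t\<^sup>2 * (x\<^sup>2 - 111/2)\<^sup>2 / 2 = t\<^sup>2 * x^4 / 2 + (111/2)\<^sup>2 * t\<^sup>2 / 2 - 111/2 * t\<^sup>2 * x\<^sup>2"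
    by (simp add: power2_eq_square power4_eq_xxxx field_simps)
  moreover have "(t * x\<^sup>2 - 1 / t)\<^sup>2 / 2 = t\<^sup>2 * x^4 / 2 + 1 / (2 * t\<^sup>2) - x\<^sup>2"
    using assms by (simp add: power2_eq_square power4_eq_xxxx field_simps)
  moreover have "(\<bar>x\<bar> - 1)\<^sup>2 = x\<^sup>2 + 1 - 2 * \<bar>x\<bar>"
    by (simp add: power2_eq_square algebra_simps)
  moreover have "0 \<le> t\<^sup>2 * (x\<^sup>2 - 111/2)\<^sup>2 / 2" "0 \<le> (t * x\<^sup>2 - 1 / t)\<^sup>2 / 2" "0 \<le> (\<bar>x\<bar> - 1)\<^sup>2"
    by simp_all
  ultimately show ?thesis
    by (simp add: right_diff_distrib)
qed

lemma norm_h_ext_le_strip_const: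
  assumes "0 \<le> a" "a \<le> b" "b \<le> 1" "0 < t" "\<bar>Im w\<bar> \<le> 3"
  shows "cmod (h_ext a b t w) \<le> strip_const t * exp (- 2 * \<bar>Re w\<bar>)"
proof -
  have "cmod (h_ext a b t w) \<le> t * exp (- (t\<^sup>2 * ((Re w)^4 - 111/2 * (Re w)\<^sup>2)))"
    using assms by (intro norm_h_ext_le) auto
  also have "\<dots> \<le> t * exp ((111/2)\<^sup>2 * t\<^sup>2 / 2 + 1 / (2 * t\<^sup>2) + 1 - 2 * \<bar>Re w\<bar>)"
    using quartic_ge_linear[OF assms(4), of "Re w"] assms by (intro mult_left_mono) auto
  also have "\<dots> = strip_const t * exp (- 2 * \<bar>Re w\<bar>)"
    unfolding strip_const_def by (simp add: mult.assoc exp_add[symmetric])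
  finally show ?thesis .
qed

text \<open>Shifting the Fourier integral defining \<open>g_t\<close> to the line \<open>Im w = 3\<close>
  produces the factor \<open>exp (- 3 * u)\<close>.\<close>
lemma g_t_eq_shifted_fourier:
  assumes ab: "0 \<le> a" "a \<le> b" "b \<le> 1" and t: "0 < t"
  shows "g_t a b t u = (exp (- 3 * u) / (2 * pi)) *\<^sub>R
           (LINT x|lborel. h_ext a b t (Complex x 3) * exp (\<i> * of_real (x * u)))"
proof -
  define F where "F = (\<lambda>w. h_ext a b t w * exp (\<i> * w * of_real u))"
  have decay: "cmod (F (Complex x y)) \<le> (strip_const t * exp (3 * \<bar>u\<bar>)) * exp (- \<bar>x\<bar>)"
    if "0 \<le> y" "y \<le> 3" for x y
  proof -
    have "cmod (h_ext a b t (Complex x y)) \<le> strip_const t * exp (- 2 * \<bar>x\<bar>)"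
      using norm_h_ext_le_strip_const[OF ab t, of "Complex x y"] that by simp
    also have "\<dots> \<le> strip_const t * exp (- \<bar>x\<bar>)"
      using strip_const_pos[OF t] by (intro mult_left_mono) auto
    finally have "cmod (h_ext a b t (Complex x y)) \<le> strip_const t * exp (- \<bar>x\<bar>)" .
    moreover have "cmod (exp (\<i> * Complex x y * of_real u)) \<le> exp (3 * \<bar>u\<bar>)"
    proof -
      have "- (y * u) \<le> y * \<bar>u\<bar>"
        using that abs_ge_minus_self[of "y * u"] by (simp add: abs_mult)
      also have "\<dots> \<le> 3 * \<bar>u\<bar>"
        using that by (intro mult_right_mono) auto
      finally show ?thesis
        by (simp add: norm_exp_eq_Re)
    qed
    ultimately have "cmod (h_ext a b t (Complex x y)) * cmod (exp (\<i> * Complex x y * of_real u))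
        \<le> strip_const t * exp (- \<bar>x\<bar>) * exp (3 * \<bar>u\<bar>)"
      using strip_const_pos[OF t] by (intro mult_mono) auto
    then show ?thesis
      unfolding F_def norm_mult by (simp add: mult_ac)
  qed
  have "F holomorphic_on UNIV"
    unfolding F_def by (intro holomorphic_intros holomorphic_h_ext)
  then have "(LINT x|lborel. F (of_real x)) = (LINT x|lborel. F (Complex x 3))"
    by (rule integral_lborel_shift_into_strip[OF _ _ decay]) auto
  moreover have "F (of_real x) = of_real (h_t a b t x) * exp (\<i> * of_real (x * u))" for x
    unfolding F_def using h_ext_of_real[OF ab(2)] by (simp add: mult.assoc)
  moreover have "F (Complex x 3) = of_real (exp (- 3 * u)) * (h_ext a b t (Complex x 3) * exp (\<i> * of_real (x * u)))" for x
  proof -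
    have "\<i> * Complex x 3 * of_real u = of_real (- 3 * u) + \<i> * of_real (x * u)"
      by (simp add: complex_eq_iff)
    then have "exp (\<i> * Complex x 3 * of_real u) = of_real (exp (- 3 * u)) * exp (\<i> * of_real (x * u))"
      by (simp only: exp_add exp_of_real)
    then show ?thesis
      unfolding F_def by (simp add: mult_ac)
  qed
  ultimately show ?thesis
    unfolding g_t_def by (simp add: scaleR_conv_of_real)
qed

lemma norm_deriv_g_t_le:
  assumes ab: "0 \<le> a" "a \<le> b" "b \<le> 1" and t: "0 < t"
  shows "cmod (vector_derivative (g_t a b t) (at u)) \<le> 2 * strip_const t * exp (- 3 * u)"
proof -
  define \<psi> where "\<psi> = (\<lambda>x. h_ext a b t (Complex x 3))"
  define \<Phi> where "\<Phi> = (\<lambda>u. LINT x|lborel. \<psi> x * exp (\<i> * of_real (x * u)))"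
  define \<Phi>' where "\<Phi>' = (\<lambda>u. LINT x|lborel. \<i> * of_real x * \<psi> x * exp (\<i> * of_real (x * u)))"
  define \<Lambda> where "\<Lambda> = strip_const t"
  have "\<Lambda> > 0"
    unfolding \<Lambda>_def by (rule strip_const_pos[OF t])
  have "continuous_on UNIV (h_ext a b t)"
    using holomorphic_h_ext holomorphic_on_imp_continuous_on by blast
  then have cont: "continuous_on UNIV \<psi>"
    unfolding \<psi>_def by (rule continuous_on_compose2) (auto intro!: continuous_intros)
  have decay: "cmod (\<psi> x) \<le> \<Lambda> * exp (- 2 * \<bar>x\<bar>)" for x
    unfolding \<psi>_def \<Lambda>_def using norm_h_ext_le_strip_const[OF ab t, of "Complex x 3"] by simp
  have bounds: "cmod (\<Phi> u) \<le> 2 * \<Lambda>" "cmod (\<Phi>' u) \<le> 2 * \<Lambda>"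
    unfolding \<Phi>_def \<Phi>'_def using norm_fourier_integrals_le[OF cont decay] by auto
  have deriv: "(g_t a b t has_vector_derivative
      (exp (- 3 * u) / (2 * pi)) *\<^sub>R \<Phi>' u + (- 3 * exp (- 3 * u) / (2 * pi)) *\<^sub>R \<Phi> u) (at u)"
  proof -
    have "g_t a b t = (\<lambda>v. (exp (- 3 * v) / (2 * pi)) *\<^sub>R \<Phi> v)"
      unfolding \<Phi>_def \<psi>_def using g_t_eq_shifted_fourier[OF ab t] by auto
    moreover have "(\<Phi> has_vector_derivative \<Phi>' u) (at u)"
      unfolding \<Phi>_def \<Phi>'_def by (rule has_vector_derivative_fourier_integral[OF cont decay])
    moreover have "((\<lambda>v. exp (- 3 * v) / (2 * pi)) has_real_derivative - 3 * exp (- 3 * u) / (2 * pi)) (at u)"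
      by (auto intro!: derivative_eq_intros)
    ultimately show ?thesis
      by (simp only:) (rule has_vector_derivative_scaleR)
  qed
  have "cmod (vector_derivative (g_t a b t) (at u)) \<le>
      exp (- 3 * u) / (2 * pi) * cmod (\<Phi>' u) + 3 * exp (- 3 * u) / (2 * pi) * cmod (\<Phi> u)"
    using norm_triangle_ineq[of "(exp (- 3 * u) / (2 * pi)) *\<^sub>R \<Phi>' u" "(- 3 * exp (- 3 * u) / (2 * pi)) *\<^sub>R \<Phi> u"]
    by (simp add: vector_derivative_at[OF deriv])
  also have "\<dots> \<le> exp (- 3 * u) / (2 * pi) * (2 * \<Lambda>) + 3 * exp (- 3 * u) / (2 * pi) * (2 * \<Lambda>)"
    using bounds by (intro add_mono mult_left_mono) auto
  also have "\<dots> \<le> 2 * \<Lambda> * exp (- 3 * u)"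
    using pi_gt3 \<open>\<Lambda> > 0\<close> by (simp add: field_simps)
  finally show ?thesis
    unfolding \<Lambda>_def .
qed

lemma norm_integral_le_if_nn_integral_le:
  fixes f :: "'a \<Rightarrow> 'b::{banach, second_countable_topology}"
  assumes "(\<integral>\<^sup>+x. ennreal (norm (f x)) \<partial>M) \<le> ennreal B" "0 \<le> B"
  shows "norm (integral\<^sup>L M f) \<le> B"
proof (cases "integrable M f")
  case True
  then have "ennreal (norm (integral\<^sup>L M f)) \<le> ennreal B"
    using integral_norm_bound_ennreal assms(1) order_trans by blast
  then show ?thesis
    using assms(2) by simp
next
  case False
  then show ?thesis
    using assms(2) by (simp add: not_integrable_integral_eq)
qed

lemma le_sinh_real: "0 \<le> x \<Longrightarrow> x \<le> sinh (x::real)"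
  using real_le_x_sinh[of x] by (simp add: sinh_field_def exp_minus)

lemma cosh_diff_ge:
  fixes \<rho> u :: real
  assumes "0 \<le> \<rho>" "\<rho> \<le> u"
  shows "\<rho> * (u - \<rho>) \<le> cosh u - cosh \<rho>"
proof (cases "\<rho> = u")
  case False
  with assms have "\<rho> < u"
    by simp
  moreover have "\<And>y. (cosh has_real_derivative sinh y) (at y)"
    using has_field_derivative_cosh[of "\<lambda>x. x" 1] by simp
  ultimately obtain z where z: "\<rho> < z" "cosh u - cosh \<rho> = (u - \<rho>) * sinh z"
    using MVT2 by blast
  have "\<rho> \<le> sinh \<rho>"
    using le_sinh_real[OF assms(1)] .
  also have "\<dots> \<le> sinh z"
    using z by simp
  finally have "\<rho> * (u - \<rho>) \<le> sinh z * (u - \<rho>)"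
    using assms by (intro mult_right_mono) auto
  with z show ?thesis
    by (simp add: mult.commute)
qed simp

lemma nn_integral_exp_div_sqrt_le:
  "(\<integral>\<^sup>+v. ennreal (indicator {0<..} v * (exp (- 3 * v) / sqrt v)) \<partial>lborel) \<le> 3"
proof -
  have "(\<integral>\<^sup>+v. ennreal (indicator {0<..} v * (exp (- 3 * v) / sqrt v)) \<partial>lborel) \<le>
      (\<integral>\<^sup>+v. ennreal (indicator {0..1} v * v powr (-1/2)) + ennreal (indicator {0..} v * exp (- v)) \<partial>lborel)"
  proof (intro nn_integral_mono)
    fix v :: real
    consider "v \<le> 0" | "0 < v" "v \<le> 1" | "1 < v"
      by linarith
    then show "ennreal (indicator {0<..} v * (exp (- 3 * v) / sqrt v)) \<le>
        ennreal (indicator {0..1} v * v powr (-1/2)) + ennreal (indicator {0..} v * exp (- v))"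
    proof cases
      case 2
      then have "exp (- 3 * v) / sqrt v \<le> v powr (-1/2)"
        by (simp add: divide_le_eq powr_minus_divide powr_half_sqrt)
      then show ?thesis
        using 2 by (simp add: ennreal_plus[symmetric] del: ennreal_plus) (intro add_increasing2, auto)
    next
      case 3
      then have "exp (- 3 * v) / sqrt v \<le> exp (- v)"
        by (simp add: divide_le_eq) (smt (verit) exp_le_cancel_iff mult_le_cancel_left1 real_sqrt_ge_one exp_gt_zero)
      then show ?thesis
        using 3 by (simp add: ennreal_plus[symmetric] del: ennreal_plus)
    qed simp
  qed
  also have "\<dots> = (\<integral>\<^sup>+v. ennreal (indicator {0..1} v * v powr (-1/2)) \<partial>lborel) +
      (\<integral>\<^sup>+v. ennreal (indicator {0..} v * exp (- v)) \<partial>lborel)"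
    by (intro nn_integral_add) auto
  also have "\<dots> = 2 + 1"
    using nn_integral_has_integral_lebesgue[OF _ has_integral_powr_from_0[of "-1/2" 1]]
      nn_integral_has_integral_lebesgue[OF _ has_integral_exp_minus_to_infinity[of 1 0]]
    by simp
  finally show ?thesis
    by simp
qed

text \<open>The integral defining \<open>K_t\<close> is an Abel transform; near \<open>u = \<rho>\<close> its kernel
  is controlled by \<open>cosh u - cosh \<rho> \<ge> \<rho> * (u - \<rho>)\<close>.\<close>
lemma norm_abel_integral_le:
  fixes g :: "real \<Rightarrow> complex"
  assumes \<rho>: "\<rho> > 0" and decay: "\<And>u. cmod (g u) \<le> B * exp (- 3 * u)"
  shows "cmod (LINT u:{\<rho><..}|lborel. g u / of_real (sqrt (cosh u - cosh \<rho>))) \<le> 3 * (B * exp (- 3 * \<rho>) / sqrt \<rho>)"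
proof -
  define M where "M = B * exp (- 3 * \<rho>) / sqrt \<rho>"
  have "B \<ge> 0"
    using decay[of 0] by (smt (verit) norm_ge_zero exp_gt_zero zero_le_mult_iff)
  then have "M \<ge> 0"
    unfolding M_def using \<rho> by simp
  have pointwise: "norm (indicator {\<rho><..} u *\<^sub>R (g u / of_real (sqrt (cosh u - cosh \<rho>))))
      \<le> M * (indicator {0<..} (u - \<rho>) * (exp (- 3 * (u - \<rho>)) / sqrt (u - \<rho>)))" for u
  proof (cases "\<rho> < u")
    case True
    then have sqrt_le: "sqrt \<rho> * sqrt (u - \<rho>) \<le> sqrt (cosh u - cosh \<rho>)" and "0 < sqrt \<rho> * sqrt (u - \<rho>)"
      using cosh_diff_ge[of \<rho> u] \<rho> by (simp_all flip: real_sqrt_mult)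
    then have "cmod (g u) / sqrt (cosh u - cosh \<rho>) \<le> B * exp (- 3 * u) / (sqrt \<rho> * sqrt (u - \<rho>))"
      using decay[of u] \<open>B \<ge> 0\<close> by (intro frac_le) auto
    also have "\<dots> = M * (exp (- 3 * (u - \<rho>)) / sqrt (u - \<rho>))"
      unfolding M_def by (simp add: field_simps flip: exp_add)
    finally show ?thesis
      using True sqrt_le \<open>0 < sqrt \<rho> * sqrt (u - \<rho>)\<close> by (simp add: norm_divide)
  qed (use \<open>M \<ge> 0\<close> in simp)
  have "(\<integral>\<^sup>+u. ennreal (norm (indicator {\<rho><..} u *\<^sub>R (g u / of_real (sqrt (cosh u - cosh \<rho>))))) \<partial>lborel)
      \<le> (\<integral>\<^sup>+u. ennreal (M * (indicator {0<..} (u - \<rho>) * (exp (- 3 * (u - \<rho>)) / sqrt (u - \<rho>)))) \<partial>lborel)"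
    by (intro nn_integral_mono ennreal_leI pointwise)
  also have "\<dots> = ennreal M * (\<integral>\<^sup>+u. ennreal (indicator {0<..} (u - \<rho>) * (exp (- 3 * (u - \<rho>)) / sqrt (u - \<rho>))) \<partial>lborel)"
    unfolding ennreal_mult'[OF \<open>M \<ge> 0\<close>] by (intro nn_integral_cmult) measurable
  also have "\<dots> = ennreal M * (\<integral>\<^sup>+v. ennreal (indicator {0<..} v * (exp (- 3 * v) / sqrt v)) \<partial>lborel)"
    using nn_integral_real_affine[of "\<lambda>v. ennreal (indicator {0<..} v * (exp (- 3 * v) / sqrt v))" 1 "-\<rho>"]
    by simp
  also have "\<dots> \<le> ennreal M * 3"
    by (intro mult_left_mono nn_integral_exp_div_sqrt_le) auto
  also have "\<dots> = ennreal (3 * M)"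
    using \<open>M \<ge> 0\<close> by (simp add: ennreal_mult' mult.commute)
  finally show ?thesis
    unfolding set_lebesgue_integral_def M_def[symmetric]
    by (rule norm_integral_le_if_nn_integral_le) (use \<open>M \<ge> 0\<close> in simp)
qed

lemma norm_K_t_le:
  assumes ab: "0 \<le> a" "a \<le> b" "b \<le> 1" and t: "0 < t" and \<rho>: "0 < \<rho>"
  shows "cmod (K_t a b t \<rho>) \<le> 2 * strip_const t * exp (- 3 * \<rho>) / sqrt \<rho>"
proof -
  define M where "M = 2 * strip_const t * exp (- 3 * \<rho>) / sqrt \<rho>"
  have "M \<ge> 0"
    unfolding M_def using strip_const_pos[OF t] \<rho> by simp
  have "3 \<le> sqrt 2 * pi"
    using pi_gt3 real_sqrt_ge_one[of 2] by (smt (verit) mult_le_cancel_right1)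
  then have "3 / (sqrt 2 * pi) * M \<le> 1 * M"
    using \<open>M \<ge> 0\<close> by (intro mult_right_mono) auto
  moreover have abs_const: "\<bar>1 / (sqrt 2 * pi)\<bar> = 1 / (sqrt 2 * pi)"
    by simp
  have "cmod (K_t a b t \<rho>) \<le> 1 / (sqrt 2 * pi) * (3 * M)"
    unfolding K_t_def norm_mult norm_minus_cancel norm_of_real abs_const M_def
    using norm_abel_integral_le[OF \<rho> norm_deriv_g_t_le[OF ab t]]
    by (intro mult_left_mono) (auto simp: mult.assoc)
  ultimately show ?thesis
    unfolding M_def by simp
qed

section \<open>Hyperbolic distance and Moebius maps\<close>

text \<open>The point-pair invariant \<open>cosh (hdist z w) - 1\<close>.\<close>
definition pp_inv :: "complex \<Rightarrow> complex \<Rightarrow> real" where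
  "pp_inv z w = (cmod (z - w))\<^sup>2 / (2 * Im z * Im w)"

lemma pp_inv_nonneg: "Im z > 0 \<Longrightarrow> Im w > 0 \<Longrightarrow> 0 \<le> pp_inv z w"
  unfolding pp_inv_def by simp

lemma hdist_nonneg: "Im z > 0 \<Longrightarrow> Im w > 0 \<Longrightarrow> 0 \<le> hdist z w"
  using pp_inv_nonneg[of z w] unfolding hdist_def pp_inv_def by (simp add: arcosh_real_def)

lemma cosh_hdist: "Im z > 0 \<Longrightarrow> Im w > 0 \<Longrightarrow> cosh (hdist z w) = 1 + pp_inv z w"
  using pp_inv_nonneg[of z w] unfolding hdist_def pp_inv_def by simp

lemma pp_inv_gt_if_hdist_gt:
  assumes "Im z > 0" "Im w > 0" "0 \<le> r" "hdist z w > 2 * r"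
  shows "pp_inv z w > 2 * r\<^sup>2"
proof -
  have "r\<^sup>2 \<le> (sinh r)\<^sup>2"
    using le_sinh_real[OF assms(3)] assms(3) by (simp add: power_mono)
  also have "2 * (sinh r)\<^sup>2 = cosh (2 * r) - 1"
    using cosh_double[of r] cosh_square_eq[of r] by simp
  also have "cosh (2 * r) < cosh (hdist z w)"
    using assms hdist_nonneg[of z w] by (intro cosh_real_strict_mono) auto
  finally show ?thesis
    using cosh_hdist[OF assms(1,2)] by simp
qed

lemma pp_inv_le_exp_if_hdist_le:
  assumes "Im z > 0" "Im w > 0" "hdist z w \<le> R"
  shows "pp_inv z w \<le> exp R"
proof -
  have "0 \<le> hdist z w"
    by (rule hdist_nonneg[OF assms(1,2)])
  then have "cosh (hdist z w) \<le> cosh R"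
    using assms(3) by (subst cosh_real_nonneg_le_iff) auto
  also have "cosh R \<le> exp R"
    using \<open>0 \<le> hdist z w\<close> assms(3) unfolding cosh_def by simp
  finally show ?thesis
    using cosh_hdist[OF assms(1,2)] by simp
qed

lemma hmob_denom_nonzero:
  assumes "a * d - b * c = 1" "Im z > 0"
  shows "of_real c * z + of_real d \<noteq> 0"
proof
  assume "of_real c * z + of_real d = 0"
  then have "c * Im z = 0" "c * Re z + d = 0"
    by (simp_all add: complex_eq_iff)
  with assms show False
    by simp
qed

lemma Im_hmob:
  assumes "a * d - b * c = 1" "Im z > 0"
  shows "Im (hmob a b c d z) = Im z / (cmod (of_real c * z + of_real d))\<^sup>2"
proof -
  have "Im (hmob a b c d z) = Im ((of_real a * z + of_real b) / (of_real c * z + of_real d))"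
    using assms(2) by (simp add: hmob_def)
  also have "\<dots> = Im z * (a * d - b * c) / (cmod (of_real c * z + of_real d))\<^sup>2"
    unfolding Im_divide' by (simp add: algebra_simps)
  finally show ?thesis
    using assms(1) by simp
qed

lemma Im_hmob_pos: "a * d - b * c = 1 \<Longrightarrow> Im z > 0 \<Longrightarrow> Im (hmob a b c d z) > 0"
  using Im_hmob hmob_denom_nonzero by simp

lemma hmob_diff:
  assumes det: "a * d - b * c = 1" and "Im z > 0" "Im w > 0"
  shows "hmob a b c d z - hmob a b c d w = (z - w) / ((of_real c * z + of_real d) * (of_real c * w + of_real d))"
proof -
  have "of_real c * z + of_real d \<noteq> 0" "of_real c * w + of_real d \<noteq> 0"
    using hmob_denom_nonzero[OF det] assms by auto
  moreover have "of_real a * of_real d - of_real b * of_real c = (1::complex)"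
    using det by (metis of_real_1 of_real_diff of_real_mult)
  ultimately show ?thesis
    using assms unfolding hmob_def by (simp add: field_simps)
qed

lemma pp_inv_hmob:
  assumes det: "a * d - b * c = 1" and z: "Im z > 0" and w: "Im w > 0"
  shows "pp_inv (hmob a b c d z) (hmob a b c d w) = pp_inv z w"
proof -
  define p q where "p = cmod (of_real c * z + of_real d)" and "q = cmod (of_real c * w + of_real d)"
  have "p > 0" "q > 0"
    unfolding p_def q_def using hmob_denom_nonzero[OF det] z w by auto
  have "pp_inv (hmob a b c d z) (hmob a b c d w) = (cmod (z - w) / (p * q))\<^sup>2 / (2 * (Im z / p\<^sup>2) * (Im w / q\<^sup>2))"
    unfolding pp_inv_def hmob_diff[OF det z w] Im_hmob[OF det z] Im_hmob[OF det w] p_def q_def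
    by (simp add: norm_divide norm_mult)
  also have "\<dots> = pp_inv z w"
    unfolding pp_inv_def using \<open>p > 0\<close> \<open>q > 0\<close> by (simp add: field_simps power_mult_distrib)
  finally show ?thesis .
qed

lemma Im_PSL2_pos: "\<gamma> \<in> PSL2 \<Longrightarrow> Im z > 0 \<Longrightarrow> Im (\<gamma> z) > 0"
  unfolding PSL2_def using Im_hmob_pos by blast

lemma pp_inv_PSL2: "\<gamma> \<in> PSL2 \<Longrightarrow> Im z > 0 \<Longrightarrow> Im w > 0 \<Longrightarrow> pp_inv (\<gamma> z) (\<gamma> w) = pp_inv z w"
  unfolding PSL2_def using pp_inv_hmob by blast

section \<open>Counting separated points\<close>

text \<open>A logarithmic grid centred at \<open>z\<close>: rows are bounded by heights \<open>Im z * exp (k * \<eta>)\<close>, and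
  a row with lower height \<open>Y\<close> is cut into columns of width \<open>\<eta> * Y\<close>, so that all cells have
  hyperbolic size \<open>O(\<eta>)\<close>.\<close>
definition cell_row :: "complex \<Rightarrow> real \<Rightarrow> complex \<Rightarrow> int" where
  "cell_row z \<eta> w = \<lfloor>ln (Im w / Im z) / \<eta>\<rfloor>"

definition row_base :: "complex \<Rightarrow> real \<Rightarrow> complex \<Rightarrow> real" where
  "row_base z \<eta> w = Im z * exp (of_int (cell_row z \<eta> w) * \<eta>)"

definition cell_col :: "complex \<Rightarrow> real \<Rightarrow> complex \<Rightarrow> int" where
  "cell_col z \<eta> w = \<lfloor>(Re w - Re z) / (\<eta> * row_base z \<eta> w)\<rfloor>"

lemma floor_divide_bounds:
  fixes x c :: real
  assumes "c > 0"
  shows "of_int \<lfloor>x / c\<rfloor> * c \<le> x" "x < (of_int \<lfloor>x / c\<rfloor> + 1) * c"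
proof -
  have "of_int \<lfloor>x / c\<rfloor> \<le> x / c" "x / c < of_int \<lfloor>x / c\<rfloor> + 1"
    by linarith+
  then show "of_int \<lfloor>x / c\<rfloor> * c \<le> x" "x < (of_int \<lfloor>x / c\<rfloor> + 1) * c"
    using pos_le_divide_eq[OF assms] pos_divide_less_eq[OF assms] by blast+
qed

lemma row_base_pos: "Im z > 0 \<Longrightarrow> row_base z \<eta> w > 0"
  unfolding row_base_def by simp

lemma row_base_le_Im:
  assumes z: "Im z > 0" and w: "Im w > 0" and \<eta>: "\<eta> > 0"
  shows "row_base z \<eta> w \<le> Im w" "Im w < row_base z \<eta> w * exp \<eta>"
proof -
  define k where "k = cell_row z \<eta> w"
  have "of_int k * \<eta> \<le> ln (Im w / Im z)" "ln (Im w / Im z) < of_int k * \<eta> + \<eta>"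
    using floor_divide_bounds[OF \<eta>, of "ln (Im w / Im z)"] unfolding k_def cell_row_def
    by (simp_all add: algebra_simps)
  moreover have "exp (ln (Im w / Im z)) = Im w / Im z"
    using z w by simp
  ultimately have "exp (of_int k * \<eta>) \<le> Im w / Im z" "Im w / Im z < exp (of_int k * \<eta>) * exp \<eta>"
    by (metis exp_le_cancel_iff, metis exp_less_cancel_iff exp_add)
  then show "row_base z \<eta> w \<le> Im w" "Im w < row_base z \<eta> w * exp \<eta>"
    using z unfolding row_base_def k_def by (simp_all add: le_divide_eq divide_less_eq mult_ac)
qed

lemma exp_le_one_plus_four_mult:
  assumes "0 \<le> (\<eta>::real)" "\<eta> \<le> 3/4"
  shows "exp \<eta> \<le> 1 + 4 * \<eta>"
proof -
  have "(1 - \<eta>) * exp \<eta> \<le> exp (- \<eta>) * exp \<eta>"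
    using exp_ge_add_one_self[of "-\<eta>"] assms by (intro mult_right_mono) auto
  then have "exp \<eta> \<le> 1 / (1 - \<eta>)"
    using assms by (simp add: field_simps flip: exp_add)
  also have "\<dots> \<le> 1 + 4 * \<eta>"
    using assms by (simp add: divide_le_eq algebra_simps) (simp add: mult_left_mono)
  finally show ?thesis .
qed

lemma pp_inv_lt_if_same_cell:
  assumes z: "Im z > 0" and w1: "Im w1 > 0" and w2: "Im w2 > 0" and \<eta>: "0 < \<eta>" "\<eta> \<le> 3/4"
    and row: "cell_row z \<eta> w1 = cell_row z \<eta> w2" and col: "cell_col z \<eta> w1 = cell_col z \<eta> w2"
  shows "pp_inv w1 w2 < 9 * \<eta>\<^sup>2"
proof -
  define Y where "Y = row_base z \<eta> w1"
  have "Y > 0"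
    unfolding Y_def using row_base_pos[OF z] .
  have Y_eq: "row_base z \<eta> w2 = Y"
    unfolding Y_def row_base_def row ..
  have "\<bar>Im w1 - Im w2\<bar> \<le> 4 * \<eta> * Y"
  proof -
    have "Y * exp \<eta> \<le> Y * (1 + 4 * \<eta>)"
      using \<open>Y > 0\<close> exp_le_one_plus_four_mult \<eta> by (intro mult_left_mono) auto
    with row_base_le_Im[OF z w1 \<eta>(1)] row_base_le_Im[OF z w2 \<eta>(1)] show ?thesis
      unfolding Y_eq Y_def[symmetric] by (simp add: algebra_simps abs_le_iff)
  qed
  moreover have "\<bar>Re w1 - Re w2\<bar> \<le> \<eta> * Y"
  proof -
    have "\<eta> * Y > 0"
      using \<eta> \<open>Y > 0\<close> by simp
    from floor_divide_bounds[OF this] show ?thesis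
      using col unfolding cell_col_def Y_eq Y_def[symmetric]
      by (simp add: algebra_simps abs_le_iff) (smt (verit))
  qed
  ultimately have "(cmod (w1 - w2))\<^sup>2 \<le> (\<eta> * Y)\<^sup>2 + (4 * \<eta> * Y)\<^sup>2"
    unfolding cmod_power2 using \<open>Y > 0\<close> \<eta>
    by (intro add_mono) (simp_all add: abs_le_square_iff[symmetric])
  moreover have "2 * Y\<^sup>2 \<le> 2 * Im w1 * Im w2"
    using row_base_le_Im[OF z w1 \<eta>(1)] row_base_le_Im[OF z w2 \<eta>(1)] \<open>Y > 0\<close>
    unfolding Y_eq Y_def[symmetric] by (simp add: power2_eq_square mult.assoc mult_mono)
  ultimately have "pp_inv w1 w2 \<le> ((\<eta> * Y)\<^sup>2 + (4 * \<eta> * Y)\<^sup>2) / (2 * Y\<^sup>2)"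
    unfolding pp_inv_def using \<open>Y > 0\<close> w1 w2 by (intro frac_le) auto
  also have "\<dots> = 17 / 2 * \<eta>\<^sup>2"
    using \<open>Y > 0\<close> by (simp add: power2_eq_square field_simps)
  also have "\<dots> < 9 * \<eta>\<^sup>2"
    using \<eta> by simp
  finally show ?thesis .
qed

lemma coords_bounded_if_pp_inv_le:
  assumes z: "Im z > 0" and w: "Im w > 0" and le: "pp_inv z w \<le> exp R" and "0 \<le> R"
  shows "Im w \<le> 4 * exp R * Im z" "Im z \<le> 4 * exp R * Im w" "(Re w - Re z)\<^sup>2 \<le> 2 * exp R * Im z * Im w"
proof -
  have "(Re w - Re z)\<^sup>2 + (Im w - Im z)\<^sup>2 = (cmod (z - w))\<^sup>2"
    by (simp add: cmod_power2 power2_commute)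
  also have "\<dots> \<le> 2 * exp R * Im z * Im w"
    using le z w unfolding pp_inv_def by (simp add: divide_le_eq mult_ac)
  finally have main: "(Re w - Re z)\<^sup>2 + (Im w - Im z)\<^sup>2 \<le> 2 * exp R * Im z * Im w" .
  then show "(Re w - Re z)\<^sup>2 \<le> 2 * exp R * Im z * Im w"
    by (smt (verit) zero_le_power2)
  have "1 \<le> exp R"
    using \<open>0 \<le> R\<close> by simp
  have "(Im w - Im z)\<^sup>2 \<le> 2 * exp R * Im z * Im w"
    using main by (smt (verit) zero_le_power2)
  then have "Im w * Im w + Im z * Im z \<le> (2 + 2 * exp R) * Im z * Im w"
    by (simp add: power2_eq_square algebra_simps)
  then have "Im w * Im w \<le> (2 + 2 * exp R) * Im z * Im w" "Im z * Im z \<le> (2 + 2 * exp R) * Im w * Im z"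
    using z w by (smt (verit) mult_pos_pos mult.commute mult.assoc)+
  then have "Im w \<le> (2 + 2 * exp R) * Im z" "Im z \<le> (2 + 2 * exp R) * Im w"
    using z w by (simp_all add: mult_le_cancel_right_pos)
  then show "Im w \<le> 4 * exp R * Im z" "Im z \<le> 4 * exp R * Im w"
    using \<open>1 \<le> exp R\<close> z w by (smt (verit) mult_right_mono)+
qed

lemma abs_floor_le:
  fixes x :: real
  shows "\<bar>x\<bar> \<le> B \<Longrightarrow> \<bar>of_int \<lfloor>x\<rfloor>\<bar> \<le> B + 1"
  by linarith

lemma abs_ln_Im_ratio_le:
  assumes z: "Im z > 0" and w: "Im w > 0" and le: "pp_inv z w \<le> exp R" and R: "0 \<le> R"
  shows "\<bar>ln (Im w / Im z)\<bar> \<le> R + 2"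
proof -
  have "Im w / Im z \<le> 4 * exp R" "Im z / Im w \<le> 4 * exp R"
    using coords_bounded_if_pp_inv_le[OF z w le R] z w by (simp_all add: pos_divide_le_eq)
  then have "ln (Im w / Im z) \<le> ln (4 * exp R)" "ln (Im z / Im w) \<le> ln (4 * exp R)"
    using z w by (simp_all del: ln_mult)
  moreover have "ln (4 * exp R) \<le> R + 2"
    using ln_realpow[of 2 2] ln_2_less_1 by (simp add: ln_mult)
  moreover have "ln (Im z / Im w) = - ln (Im w / Im z)"
    using z w by (simp add: ln_div)
  ultimately show ?thesis
    by linarith
qed

lemma abs_cell_row_le:
  assumes "Im z > 0" "Im w > 0" "pp_inv z w \<le> exp R" "0 \<le> R" "0 < \<eta>"
  shows "\<bar>of_int (cell_row z \<eta> w)\<bar> \<le> (R + 2) / \<eta> + 1"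
  unfolding cell_row_def using abs_ln_Im_ratio_le[OF assms(1-4)] assms(5)
  by (intro abs_floor_le) (simp add: abs_divide divide_right_mono)

lemma abs_cell_col_le:
  assumes z: "Im z > 0" and w: "Im w > 0" and le: "pp_inv z w \<le> exp R" and R: "0 \<le> R"
    and \<eta>: "0 < \<eta>" "\<eta> \<le> 1"
  shows "\<bar>of_int (cell_col z \<eta> w)\<bar> \<le> 3 * exp (2 * R + 3) / \<eta> + 1"
  unfolding cell_col_def
proof (intro abs_floor_le)
  define Y where "Y = row_base z \<eta> w"
  have "ln (Im w / Im z) < (of_int (cell_row z \<eta> w) + 1) * \<eta>"
    using floor_divide_bounds(2)[OF \<eta>(1)] unfolding cell_row_def .
  then have "- (R + 3) \<le> of_int (cell_row z \<eta> w) * \<eta>"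
    using abs_ln_Im_ratio_le[OF z w le R] \<eta> by (simp add: algebra_simps abs_le_iff)
  then have "Im z * exp (- (R + 3)) \<le> Y"
    unfolding Y_def row_base_def using z by simp
  have "(Re w - Re z)\<^sup>2 \<le> 2 * exp R * Im z * (4 * exp R * Im z)"
    using coords_bounded_if_pp_inv_le[OF z w le R] z
    by (smt (verit) exp_gt_zero mult_left_mono mult_pos_pos)
  also have "\<dots> \<le> (3 * exp R * Im z)\<^sup>2"
    using z by (simp add: power2_eq_square)
  finally have "\<bar>Re w - Re z\<bar> \<le> 3 * exp R * Im z"
    using z abs_le_square_iff[of "Re w - Re z" "3 * exp R * Im z"] by (simp add: abs_mult)
  then have "\<bar>Re w - Re z\<bar> / (\<eta> * Y) \<le> 3 * exp R * Im z / (\<eta> * (Im z * exp (- (R + 3))))"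
    using \<open>Im z * exp (- (R + 3)) \<le> Y\<close> \<eta> z by (intro frac_le mult_left_mono) auto
  also have "\<dots> = 3 * exp (2 * R + 3) / \<eta>"
    using z \<eta> by (simp add: field_simps exp_minus flip: exp_add)
  finally show "\<bar>(Re w - Re z) / (\<eta> * row_base z \<eta> w)\<bar> \<le> 3 * exp (2 * R + 3) / \<eta>"
    using row_base_pos[OF z, of \<eta> w] \<eta> unfolding Y_def by (simp add: abs_divide abs_mult)
qed

lemma mem_floor_box_if_abs_le:
  fixes k :: int
  assumes "\<bar>of_int k\<bar> \<le> X + 1"
  shows "k \<in> {-(\<lfloor>X\<rfloor> + 1)..\<lfloor>X\<rfloor> + 1}"
proof -
  have "\<bar>k\<bar> - 1 \<le> \<lfloor>X\<rfloor>"
    using assms by (simp add: le_floor_iff)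
  then show ?thesis
    by auto
qed

lemma card_floor_box_le: "0 \<le> X \<Longrightarrow> real (card {-(\<lfloor>X\<rfloor> + 1)..\<lfloor>X\<rfloor> + 1}) \<le> 2 * X + 3"
  by simp

lemma grid_size_le:
  fixes r R :: real
  assumes r: "0 < r" "r < 3" and R: "0 \<le> R"
  shows "(2 * (12 * exp (2 * R + 3) / r) + 3) * (2 * (4 * (R + 2) / r) + 3) \<le> 825 * exp (2 * R + 3) * (R + 1) / r\<^sup>2"
proof -
  have "3 \<le> 9 * exp (2 * R + 3) / r" "3 \<le> 9 / r"
    using r R by (simp_all add: le_divide_eq) (smt (verit) one_le_exp_iff mult_le_cancel_left1)
  then have "2 * (12 * exp (2 * R + 3) / r) + 3 \<le> 33 * exp (2 * R + 3) / r"
    using r by (simp add: field_simps)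
  moreover have "2 * (4 * (R + 2) / r) + 3 \<le> 25 * (R + 1) / r"
  proof -
    have "2 * (4 * (R + 2) / r) + 3 \<le> (8 * R + 16) / r + 9 / r"
      using \<open>3 \<le> 9 / r\<close> by (simp add: field_simps)
    also have "\<dots> \<le> 25 * (R + 1) / r"
      using r R by (simp add: divide_right_mono flip: add_divide_distrib)
    finally show ?thesis .
  qed
  ultimately have "(2 * (12 * exp (2 * R + 3) / r) + 3) * (2 * (4 * (R + 2) / r) + 3)
      \<le> (33 * exp (2 * R + 3) / r) * (25 * (R + 1) / r)"
    using r R by (intro mult_mono) auto
  also have "\<dots> = 825 * exp (2 * R + 3) * (R + 1) / r\<^sup>2"
    by (simp add: power2_eq_square field_simps)
  finally show ?thesis .
qed

text \<open>With \<open>\<eta> = r / 4\<close>, two points in the same cell are closer than allowed,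
  so the points inject into the cells meeting the ball.\<close>
lemma card_separated_points_le:
  fixes p :: "'a \<Rightarrow> complex"
  assumes z: "Im z > 0" and r: "0 < r" "r < 3" and R: "0 \<le> R"
    and near: "\<And>\<alpha>. \<alpha> \<in> A \<Longrightarrow> Im (p \<alpha>) > 0 \<and> pp_inv z (p \<alpha>) \<le> exp R"
    and sep: "\<And>\<alpha> \<beta>. \<alpha> \<in> A \<Longrightarrow> \<beta> \<in> A \<Longrightarrow> \<alpha> \<noteq> \<beta> \<Longrightarrow> pp_inv (p \<alpha>) (p \<beta>) > 2 * r\<^sup>2"
  shows "finite A" "real (card A) \<le> 825 * exp (2 * R + 3) * (R + 1) / r\<^sup>2"
proof -
  define \<eta> where "\<eta> = r / 4"
  have \<eta>: "0 < \<eta>" "\<eta> \<le> 3/4" "\<eta> \<le> 1"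
    unfolding \<eta>_def using r by auto
  define cell where "cell = (\<lambda>\<alpha>. (cell_col z \<eta> (p \<alpha>), cell_row z \<eta> (p \<alpha>)))"
  define Xc Xr where "Xc = 3 * exp (2 * R + 3) / \<eta>" and "Xr = (R + 2) / \<eta>"
  define box where "box = (\<lambda>X::real. {-(\<lfloor>X\<rfloor> + 1)..\<lfloor>X\<rfloor> + 1})"
  have "inj_on cell A"
  proof (rule inj_onI, rule ccontr)
    fix \<alpha> \<beta>
    assume "\<alpha> \<in> A" "\<beta> \<in> A" "cell \<alpha> = cell \<beta>" "\<alpha> \<noteq> \<beta>"
    then have "pp_inv (p \<alpha>) (p \<beta>) < 9 * \<eta>\<^sup>2"
      using near by (intro pp_inv_lt_if_same_cell[OF z _ _ \<eta>(1,2)]) (auto simp: cell_def)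
    also have "\<dots> \<le> 2 * r\<^sup>2"
      unfolding \<eta>_def by (simp add: power2_eq_square)
    finally show False
      using sep \<open>\<alpha> \<in> A\<close> \<open>\<beta> \<in> A\<close> \<open>\<alpha> \<noteq> \<beta>\<close> by fastforce
  qed
  moreover have "cell \<alpha> \<in> box Xc \<times> box Xr" if "\<alpha> \<in> A" for \<alpha>
    using near[OF that] unfolding cell_def box_def Xc_def Xr_def mem_Times_iff fst_conv snd_conv
    by (intro conjI mem_floor_box_if_abs_le abs_cell_col_le[OF z _ _ R \<eta>(1,3)] abs_cell_row_le[OF z _ _ R \<eta>(1)]) auto
  then have "cell ` A \<subseteq> box Xc \<times> box Xr"
    by blast
  ultimately show "finite A"
    unfolding box_def by (meson finite_SigmaI finite_atLeastAtMost_int inj_on_finite)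
  have "card A \<le> card (box Xc) * card (box Xr)"
    using card_inj_on_le[OF \<open>inj_on cell A\<close> \<open>cell ` A \<subseteq> _\<close>] by (simp add: box_def card_cartesian_product)
  then have "real (card A) \<le> (2 * Xc + 3) * (2 * Xr + 3)"
    using card_floor_box_le[of Xc] card_floor_box_le[of Xr] \<eta> R unfolding box_def Xc_def Xr_def
    by (smt (verit) divide_nonneg_pos exp_ge_zero mult_mono of_nat_0_le_iff of_nat_mono of_nat_mult)
  also have "\<dots> = (2 * (12 * exp (2 * R + 3) / r) + 3) * (2 * (4 * (R + 2) / r) + 3)"
    unfolding Xc_def Xr_def \<eta>_def by simp
  also have "\<dots> \<le> 825 * exp (2 * R + 3) * (R + 1) / r\<^sup>2"
    by (rule grid_size_le[OF r R])
  finally show "real (card A) \<le> 825 * exp (2 * R + 3) * (R + 1) / r\<^sup>2" .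
qed

section \<open>The orbital sum\<close>

lemma sum_power_le_geometric:
  fixes q :: real
  assumes "finite S" "S \<subseteq> {k0..}" "0 \<le> q" "q < 1"
  shows "(\<Sum>k\<in>S. q ^ k) \<le> q ^ k0 / (1 - q)"
proof -
  obtain N where "S \<subseteq> {..<N}"
    using finite_nat_bounded[OF assms(1)] by blast
  then have "S \<subseteq> {k0..N}"
    using assms(2) by (force simp: subset_iff)
  then have "(\<Sum>k\<in>S. q ^ k) \<le> (\<Sum>k=k0..N. q ^ k)"
    using assms(3) by (intro sum_mono2) auto
  also have "\<dots> \<le> q ^ k0 / (1 - q)"
    using assms by (simp add: sum_gp divide_right_mono)
  finally show ?thesis .
qed

lemma geometric_tail_exp_le:
  fixes m :: real
  assumes "m > 0"
  shows "exp (-3/4) ^ nat \<lfloor>m\<rfloor> / (1 - exp (-3/4)) \<le> 7/3 * exp (3/4) * exp (- 3 * m / 4)"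
proof -
  have "m - 1 \<le> real (nat \<lfloor>m\<rfloor>)"
    using assms by linarith
  have "exp (-3/4) ^ nat \<lfloor>m\<rfloor> = exp (real (nat \<lfloor>m\<rfloor>) * (-3/4))"
    unfolding exp_of_nat_mult ..
  also have "\<dots> \<le> exp ((m - 1) * (-3/4))"
    using \<open>m - 1 \<le> real (nat \<lfloor>m\<rfloor>)\<close> by simp
  also have "(m - 1) * (-3/4) = 3/4 + (- 3 * m / 4)"
    by (simp add: field_simps)
  also have "exp (3/4 + (- 3 * m / 4)) = exp (3/4) * exp (- 3 * m / 4)"
    by (rule exp_add)
  finally have "exp (-3/4) ^ nat \<lfloor>m\<rfloor> \<le> exp (3/4) * exp (- 3 * m / 4)" .
  moreover have "1 / (1 - exp (-3/4)) \<le> (7/3::real)"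
  proof -
    have "1 + 3/4 \<le> exp (3/4::real)"
      by (rule exp_ge_add_one_self)
    then have "exp (-3/4) \<le> (4/7::real)"
      by (simp add: exp_minus inverse_eq_divide divide_le_eq)
    then show ?thesis
      by (simp add: divide_le_eq)
  qed
  ultimately have "exp (-3/4) ^ nat \<lfloor>m\<rfloor> * (1 / (1 - exp (-3/4))) \<le> exp (3/4) * exp (- 3 * m / 4) * (7/3)"
    by (intro mult_mono) auto
  then show ?thesis
    by (simp add: mult_ac)
qed

text \<open>The points with \<open>\<lfloor>d x\<rfloor> = k\<close> number at most \<open>c * exp (2 * k + 2) * (k + 2)\<close>,
  and each contributes at most \<open>exp (- 3 * k)\<close>.\<close>
lemma sum_exp_neg_floor_class_le:
  fixes d :: "'a \<Rightarrow> real"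
  assumes F: "finite F" and d: "\<And>x. x \<in> F \<Longrightarrow> 0 \<le> d x" and "c \<ge> 0"
    and count: "\<And>R. R \<ge> 0 \<Longrightarrow> real (card {x\<in>F. d x \<le> R}) \<le> c * exp (2 * R) * (R + 1)"
  shows "(\<Sum>x\<in>{x\<in>F. nat \<lfloor>d x\<rfloor> = k}. exp (- 3 * d x)) \<le> 8 * exp 2 * c * exp (-3/4) ^ k"
proof -
  have "(\<Sum>x\<in>{x\<in>F. nat \<lfloor>d x\<rfloor> = k}. exp (- 3 * d x)) \<le> (\<Sum>x\<in>{x\<in>F. d x \<le> real k + 1}. exp (- 3 * real k))"
  proof (rule sum_le_included[where i=id])
    show "\<forall>x\<in>{x\<in>F. nat \<lfloor>d x\<rfloor> = k}. \<exists>y\<in>{x\<in>F. d x \<le> real k + 1}. id y = x \<and> exp (- 3 * d x) \<le> exp (- 3 * real k)"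
      using d by (force intro: of_nat_floor)
  qed (use F in auto)
  also have "\<dots> = real (card {x\<in>F. d x \<le> real k + 1}) * exp (- 3 * real k)"
    by simp
  also have "\<dots> \<le> c * exp (2 * (real k + 1)) * (real k + 1 + 1) * exp (- 3 * real k)"
    by (intro mult_right_mono count) auto
  also have "\<dots> = exp 2 * c * ((real k + 2) * exp (- real k))"
    by (simp add: algebra_simps flip: exp_add)
  also have "\<dots> \<le> exp 2 * c * (8 * exp (real k / 4) * exp (- real k))"
  proof -
    have "real k + 2 \<le> 8 * exp (real k / 4)"
      using exp_ge_add_one_self[of "real k / 4"] by linarith
    then show ?thesis
      using \<open>c \<ge> 0\<close> by (intro mult_left_mono mult_right_mono) auto
  qed
  also have "\<dots> = 8 * exp 2 * c * exp (-3/4) ^ k"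
    by (simp add: mult_ac flip: exp_add exp_of_nat_mult)
  finally show ?thesis .
qed

lemma sum_exp_neg_le_if_count_le:
  fixes d :: "'a \<Rightarrow> real"
  assumes F: "finite F" and m: "m > 0" and dm: "\<And>x. x \<in> F \<Longrightarrow> m \<le> d x"
    and count: "\<And>R. R \<ge> 0 \<Longrightarrow> real (card {x\<in>F. d x \<le> R}) \<le> c * exp (2 * R) * (R + 1)"
  shows "(\<Sum>x\<in>F. exp (- 3 * d x)) \<le> 56/3 * exp (11/4) * c * exp (- 3 * m / 4)"
proof -
  define q :: real where "q = exp (-3/4)"
  have "c \<ge> 0"
    using count[of 0] of_nat_0_le_iff order_trans by fastforce
  have "(\<Sum>x\<in>F. exp (- 3 * d x)) = (\<Sum>k\<in>(\<lambda>x. nat \<lfloor>d x\<rfloor>) ` F. \<Sum>x\<in>{x\<in>F. nat \<lfloor>d x\<rfloor> = k}. exp (- 3 * d x))"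
    by (rule sum.image_gen[OF F])
  also have "\<dots> \<le> (\<Sum>k\<in>(\<lambda>x. nat \<lfloor>d x\<rfloor>) ` F. 8 * exp 2 * c * q ^ k)"
    unfolding q_def using dm m \<open>c \<ge> 0\<close>
    by (intro sum_mono sum_exp_neg_floor_class_le[OF F _ _ count]) force+
  also have "\<dots> \<le> 8 * exp 2 * c * (q ^ nat \<lfloor>m\<rfloor> / (1 - q))"
    unfolding sum_distrib_left[symmetric] using \<open>c \<ge> 0\<close> F dm
    by (intro mult_left_mono sum_power_le_geometric) (auto simp: q_def intro: nat_mono floor_mono)
  also have "\<dots> \<le> 8 * exp 2 * c * (7/3 * exp (3/4) * exp (- 3 * m / 4))"
    unfolding q_def using geometric_tail_exp_le[OF m] \<open>c \<ge> 0\<close> by (intro mult_left_mono) auto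
  also have "\<dots> = 56/3 * exp (11/4) * c * exp (- 3 * m / 4)"
  proof -
    have "exp (11/4) = exp 2 * exp (3/4::real)"
      by (simp flip: exp_add)
    then show ?thesis
      by (simp add: mult_ac)
  qed
  finally show ?thesis .
qed

lemma norm_infsum_le_if_finite_sums_le:
  fixes f :: "'a \<Rightarrow> complex"
  assumes "\<And>F. finite F \<Longrightarrow> F \<subseteq> A \<Longrightarrow> (\<Sum>x\<in>F. cmod (f x)) \<le> B" and "0 \<le> B"
  shows "cmod (infsum f A) \<le> B"
proof (cases "f summable_on A")
  case True
  then have "(\<lambda>x. cmod (f x)) summable_on A"
    by (simp add: summable_on_iff_abs_summable_on_complex)
  then show ?thesis
    using norm_infsum_bound infsum_le_finite_sums assms(1) order_trans by blast
next
  case False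
  then show ?thesis
    using assms(2) by (simp add: infsum_not_exists)
qed

lemma pp_inv_orbit_separated:
  assumes \<Gamma>: "subgroup_PSL2 \<Gamma>" and z: "Im z > 0" and "0 \<le> r"
    and displaced: "\<And>\<gamma>. \<gamma> \<in> \<Gamma> - {id} \<Longrightarrow> hdist z (\<gamma> z) > 2 * r"
    and \<gamma>: "\<gamma>1 \<in> \<Gamma>" "\<gamma>2 \<in> \<Gamma>" "\<gamma>1 \<noteq> \<gamma>2"
  shows "pp_inv (\<gamma>1 z) (\<gamma>2 z) > 2 * r\<^sup>2"
proof -
  obtain \<delta> where \<delta>: "\<delta> \<in> \<Gamma>" "\<gamma>1 \<circ> \<delta> = id"
    using \<Gamma> \<gamma>(1) unfolding subgroup_PSL2_def by blast
  define \<gamma> where "\<gamma> = \<delta> \<circ> \<gamma>2"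
  have "\<gamma> \<in> \<Gamma>"
    using \<Gamma> \<delta>(1) \<gamma>(2) unfolding \<gamma>_def subgroup_PSL2_def by blast
  have "\<gamma>1 \<circ> \<gamma> = \<gamma>2"
    unfolding \<gamma>_def using \<delta>(2) by (metis comp_assoc id_comp)
  then have "\<gamma> \<noteq> id"
    using \<gamma>(3) by auto
  have "\<Gamma> \<subseteq> PSL2"
    using \<Gamma> unfolding subgroup_PSL2_def by blast
  then have "Im (\<gamma> z) > 0"
    using Im_PSL2_pos \<open>\<gamma> \<in> \<Gamma>\<close> z by blast
  have "pp_inv (\<gamma>1 z) (\<gamma>2 z) = pp_inv (\<gamma>1 z) (\<gamma>1 (\<gamma> z))"
    using \<open>\<gamma>1 \<circ> \<gamma> = \<gamma>2\<close> by (metis comp_apply)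
  also have "\<dots> = pp_inv z (\<gamma> z)"
    using pp_inv_PSL2 \<open>\<Gamma> \<subseteq> PSL2\<close> \<gamma>(1) z \<open>Im (\<gamma> z) > 0\<close> by blast
  also have "\<dots> > 2 * r\<^sup>2"
    using pp_inv_gt_if_hdist_gt[OF z \<open>Im (\<gamma> z) > 0\<close> \<open>0 \<le> r\<close>] displaced \<open>\<gamma> \<in> \<Gamma>\<close> \<open>\<gamma> \<noteq> id\<close> by blast
  finally show ?thesis .
qed

lemma norm_K_t_le_if_hdist_gt:
  assumes ab: "0 \<le> a" "a \<le> b" "b \<le> 1" and t: "0 < t" and r: "0 < r" "r < 3" and d: "2 * r < d"
  shows "cmod (K_t a b t d) \<le> 4 * strip_const t / r * exp (- 3 * d)"
proof -
  have "cmod (K_t a b t d) \<le> 2 * strip_const t * exp (- 3 * d) / sqrt d"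
    using d r by (intro norm_K_t_le[OF ab t]) auto
  also have "\<dots> \<le> 2 * strip_const t * exp (- 3 * d) / (r / 2)"
  proof (rule divide_left_mono)
    have "r * r \<le> 3 * r"
      using r by (intro mult_right_mono) auto
    moreover have "(r / 2)\<^sup>2 = r * r / 4"
      by (simp add: power2_eq_square)
    ultimately have "(r / 2)\<^sup>2 \<le> d"
      using d r by linarith
    then show "r / 2 \<le> sqrt d"
      by (rule real_le_rsqrt)
  qed (use strip_const_pos[OF t] r d in auto)
  finally show ?thesis
    by simp
qed

text \<open>\<open>61600 = 4 * 56/3 * 825\<close> and \<open>exp (23/4) = exp (11/4) * exp 3\<close> collect the constants of
  the kernel bound, the geometric series and the grid count.\<close>
definition orbital_bound :: "real \<Rightarrow> real \<Rightarrow> real \<Rightarrow> real" where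
  "orbital_bound t r m = 61600 * exp (23/4) * strip_const t * exp (- 3 * m / 4) / r ^ 3"

text \<open>Orbit points are \<open>2 * r\<close>-separated, so by the grid count their number within distance \<open>R\<close>
  of \<open>z\<close> grows like \<open>exp (2 * R)\<close>, which the decay \<open>exp (- 3 * d)\<close> of the kernel beats.\<close>
lemma norm_orbital_sum_le:
  assumes ab: "0 \<le> a" "a \<le> b" "b \<le> 1" and t: "0 < t" and \<Gamma>: "subgroup_PSL2 \<Gamma>"
    and z: "Im z > 0" and r: "0 < r" "r < 3" and m: "m > 0"
    and displaced: "\<And>\<gamma>. \<gamma> \<in> \<Gamma> - {id} \<Longrightarrow> 2 * r < hdist z (\<gamma> z) \<and> m \<le> hdist z (\<gamma> z)"
  shows "cmod (infsum (\<lambda>\<gamma>. K_t a b t (hdist z (\<gamma> z))) (\<Gamma> - {id})) \<le> orbital_bound t r m"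
proof (rule norm_infsum_le_if_finite_sums_le)
  show "0 \<le> orbital_bound t r m"
    unfolding orbital_bound_def using strip_const_pos[OF t] r by simp
  fix F
  assume F: "finite F" "F \<subseteq> \<Gamma> - {id}"
  define d where "d = (\<lambda>\<gamma>. hdist z (\<gamma> z))"
  have Im_orbit: "Im (\<gamma> z) > 0" if "\<gamma> \<in> \<Gamma>" for \<gamma>
    using Im_PSL2_pos \<Gamma> that z unfolding subgroup_PSL2_def by blast
  have "(\<Sum>\<gamma>\<in>F. exp (- 3 * d \<gamma>)) \<le> 56/3 * exp (11/4) * (825 * exp 3 / r\<^sup>2) * exp (- 3 * m / 4)"
  proof (rule sum_exp_neg_le_if_count_le[OF F(1) m])
    show "m \<le> d \<gamma>" if "\<gamma> \<in> F" for \<gamma>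
      using displaced F that unfolding d_def by auto
    fix R :: real
    assume "R \<ge> 0"
    have "real (card {\<gamma>\<in>F. d \<gamma> \<le> R}) \<le> 825 * exp (2 * R + 3) * (R + 1) / r\<^sup>2"
    proof (rule card_separated_points_le(2)[OF z r \<open>R \<ge> 0\<close>, where p="\<lambda>\<gamma>. \<gamma> z"])
      show "0 < Im (\<gamma> z) \<and> pp_inv z (\<gamma> z) \<le> exp R" if "\<gamma> \<in> {\<gamma>\<in>F. d \<gamma> \<le> R}" for \<gamma>
        using that F Im_orbit pp_inv_le_exp_if_hdist_le[OF z] unfolding d_def by blast
      show "2 * r\<^sup>2 < pp_inv (\<alpha> z) (\<beta> z)"
        if "\<alpha> \<in> {\<gamma>\<in>F. d \<gamma> \<le> R}" "\<beta> \<in> {\<gamma>\<in>F. d \<gamma> \<le> R}" "\<alpha> \<noteq> \<beta>" for \<alpha> \<beta>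
        using that F r displaced by (intro pp_inv_orbit_separated[OF \<Gamma> z]) auto
    qed
    then show "real (card {\<gamma>\<in>F. d \<gamma> \<le> R}) \<le> 825 * exp 3 / r\<^sup>2 * exp (2 * R) * (R + 1)"
      by (simp add: exp_add mult_ac)
  qed
  moreover have "(\<Sum>\<gamma>\<in>F. cmod (K_t a b t (d \<gamma>))) \<le> 4 * strip_const t / r * (\<Sum>\<gamma>\<in>F. exp (- 3 * d \<gamma>))"
    unfolding sum_distrib_left using F displaced unfolding d_def
    by (intro sum_mono norm_K_t_le_if_hdist_gt[OF ab t r]) auto
  ultimately have "(\<Sum>\<gamma>\<in>F. cmod (K_t a b t (d \<gamma>)))
      \<le> 4 * strip_const t / r * (56/3 * exp (11/4) * (825 * exp 3 / r\<^sup>2) * exp (- 3 * m / 4))"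
    using strip_const_pos[OF t] r by (smt (verit) divide_pos_pos mult_left_mono)
  also have "\<dots> = orbital_bound t r m"
    unfolding orbital_bound_def by (simp add: power2_eq_square power3_eq_cube field_simps flip: exp_add)
  finally show "(\<Sum>\<gamma>\<in>F. cmod (K_t a b t (hdist z (\<gamma> z)))) \<le> orbital_bound t r m"
    unfolding d_def .
qed

section \<open>Integration over a fundamental domain\<close>

lemma norm_set_integral_le_split:
  fixes f :: "'a \<Rightarrow> 'b::{banach, second_countable_topology}"
  assumes D: "D \<in> sets M" "emeasure M D < \<infinity>" and T: "T \<in> sets M" "T \<subseteq> D"
    and P: "0 \<le> P1" "0 \<le> P2"
    and bound: "\<And>z. z \<in> D \<Longrightarrow> norm (f z) \<le> P1 + (if z \<in> T then P2 else 0)"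
  shows "norm (set_lebesgue_integral M D f) \<le> P1 * measure M D + P2 * measure M T"
  unfolding set_lebesgue_integral_def
proof (rule norm_integral_le_if_nn_integral_le)
  have "emeasure M T < \<infinity>"
    using D T emeasure_mono le_less_trans by metis
  have "(\<integral>\<^sup>+z. ennreal (norm (indicator D z *\<^sub>R f z)) \<partial>M) \<le>
      (\<integral>\<^sup>+z. ennreal P1 * indicator D z + ennreal P2 * indicator T z \<partial>M)"
  proof (intro nn_integral_mono)
    fix z
    show "ennreal (norm (indicator D z *\<^sub>R f z)) \<le> ennreal P1 * indicator D z + ennreal P2 * indicator T z"
      using bound[of z] T(2) P
      by (cases "z \<in> D"; cases "z \<in> T") (auto simp: indicator_def ennreal_plus[symmetric] simp del: ennreal_plus)
  qed
  also have "\<dots> = ennreal P1 * emeasure M D + ennreal P2 * emeasure M T"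
    using D T by (simp add: nn_integral_add nn_integral_cmult_indicator)
  also have "\<dots> = ennreal (P1 * measure M D + P2 * measure M T)"
    using D \<open>emeasure M T < \<infinity>\<close> P
    by (simp add: emeasure_eq_ennreal_measure ennreal_mult[symmetric] ennreal_plus[symmetric] del: ennreal_plus)
  finally show "(\<integral>\<^sup>+z. ennreal (norm (indicator D z *\<^sub>R f z)) \<partial>M) \<le> ennreal (P1 * measure M D + P2 * measure M T)" .
  show "0 \<le> P1 * measure M D + P2 * measure M T"
    using P by simp
qed

lemma hdist_orbit_nonneg: "subgroup_PSL2 \<Gamma> \<Longrightarrow> \<gamma> \<in> \<Gamma> \<Longrightarrow> Im z > 0 \<Longrightarrow> 0 \<le> hdist z (\<gamma> z)"
  using Im_PSL2_pos hdist_nonneg unfolding subgroup_PSL2_def by blast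

lemma bdd_below_displacements:
  "subgroup_PSL2 \<Gamma> \<Longrightarrow> Im z > 0 \<Longrightarrow> bdd_below ((\<lambda>\<gamma>. hdist z (\<gamma> z)) ` (\<Gamma> - {id}))"
  using hdist_orbit_nonneg by (intro bdd_belowI[where m=0]) blast

lemma injrad_at_le_hdist:
  "subgroup_PSL2 \<Gamma> \<Longrightarrow> Im z > 0 \<Longrightarrow> \<gamma> \<in> \<Gamma> - {id} \<Longrightarrow> 2 * injrad_at \<Gamma> z \<le> hdist z (\<gamma> z)"
  unfolding injrad_at_def using cInf_lower[OF imageI bdd_below_displacements] by simp

lemma injrad_at_nonneg:
  "subgroup_PSL2 \<Gamma> \<Longrightarrow> \<Gamma> - {id} \<noteq> {} \<Longrightarrow> Im z > 0 \<Longrightarrow> 0 \<le> injrad_at \<Gamma> z"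
  unfolding injrad_at_def using hdist_orbit_nonneg by (auto intro!: cInf_greatest)

lemma injrad_le_injrad_at:
  "subgroup_PSL2 \<Gamma> \<Longrightarrow> \<Gamma> - {id} \<noteq> {} \<Longrightarrow> Im z > 0 \<Longrightarrow> injrad \<Gamma> \<le> injrad_at \<Gamma> z"
  unfolding injrad_def using injrad_at_nonneg
  by (intro cInf_lower) (auto simp: Hplane_def intro!: bdd_belowI[where m=0])

lemma injrad_at_less_iff:
  assumes "subgroup_PSL2 \<Gamma>" "\<Gamma> - {id} \<noteq> {}" "Im z > 0"
  shows "injrad_at \<Gamma> z < L \<longleftrightarrow> (\<exists>\<gamma>\<in>\<Gamma> - {id}. hdist z (\<gamma> z) < 2 * L)"
proof -
  have "injrad_at \<Gamma> z < L \<longleftrightarrow> (INF \<gamma>\<in>\<Gamma> - {id}. hdist z (\<gamma> z)) < 2 * L"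
    unfolding injrad_at_def by linarith
  also have "\<dots> \<longleftrightarrow> (\<exists>\<gamma>\<in>\<Gamma> - {id}. hdist z (\<gamma> z) < 2 * L)"
    using cInf_less_iff[of "(\<lambda>\<gamma>. hdist z (\<gamma> z)) ` (\<Gamma> - {id})"] assms bdd_below_displacements by auto
  finally show ?thesis .
qed

lemma continuous_on_hdist_orbit:
  assumes "\<gamma> \<in> PSL2"
  shows "continuous_on Hplane (\<lambda>z. hdist z (\<gamma> z))"
proof -
  obtain a b c d where det: "a * d - b * c = 1" and \<gamma>: "\<gamma> = hmob a b c d"
    using assms unfolding PSL2_def by auto
  define \<phi> where "\<phi> = (\<lambda>z::complex. (of_real a * z + of_real b) / (of_real c * z + of_real d))"
  have eq: "\<gamma> z = \<phi> z" and "Im (\<phi> z) > 0" if "z \<in> Hplane" for z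
    using that Im_hmob_pos[OF det] unfolding \<gamma> hmob_def \<phi>_def Hplane_def by auto
  have "continuous_on Hplane \<phi>"
    unfolding \<phi>_def using hmob_denom_nonzero[OF det] by (auto intro!: continuous_intros simp: Hplane_def)
  have "continuous_on Hplane (\<lambda>z. arcosh (1 + (cmod (z - \<phi> z))\<^sup>2 / (2 * Im z * Im (\<phi> z))))"
  proof (rule continuous_on_compose2[OF continuous_on_arcosh[OF order.refl]])
    show "continuous_on Hplane (\<lambda>z. 1 + (cmod (z - \<phi> z))\<^sup>2 / (2 * Im z * Im (\<phi> z)))"
      using \<open>continuous_on Hplane \<phi>\<close> \<open>\<And>z. z \<in> Hplane \<Longrightarrow> Im (\<phi> z) > 0\<close>
      by (auto intro!: continuous_intros simp: Hplane_def) (metis less_irrefl)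
    show "(\<lambda>z. 1 + (cmod (z - \<phi> z))\<^sup>2 / (2 * Im z * Im (\<phi> z))) ` Hplane \<subseteq> {1..}"
      using \<open>\<And>z. z \<in> Hplane \<Longrightarrow> Im (\<phi> z) > 0\<close> by (auto simp: Hplane_def less_imp_le)
  qed
  then show ?thesis
    by (rule continuous_on_cong[THEN iffD1, rotated 2]) (auto simp: hdist_def eq)
qed

lemma thin_part_borel:
  assumes \<Gamma>: "subgroup_PSL2 \<Gamma>" "\<Gamma> - {id} \<noteq> {}" and D: "D \<in> sets borel" "D \<subseteq> Hplane"
  shows "{z\<in>D. injrad_at \<Gamma> z < L} \<in> sets borel"
proof -
  define U where "U = (\<Union>\<gamma>\<in>\<Gamma> - {id}. Hplane \<inter> (\<lambda>z. hdist z (\<gamma> z)) -` {..<2 * L})"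
  have "open U"
    unfolding U_def using \<Gamma>(1) open_halfspace_Im_gt[of 0] unfolding subgroup_PSL2_def Hplane_def
    by (intro open_UN ballI continuous_open_preimage continuous_on_hdist_orbit[unfolded Hplane_def]) auto
  moreover have "{z\<in>D. injrad_at \<Gamma> z < L} = D \<inter> U"
    using D injrad_at_less_iff[OF \<Gamma>] unfolding U_def Hplane_def by auto
  ultimately show ?thesis
    using D by auto
qed

lemma orbital_bound_nonneg: "0 < t \<Longrightarrow> 0 < r \<Longrightarrow> 0 \<le> orbital_bound t r m"
  unfolding orbital_bound_def using strip_const_pos[of t] by simp

lemma norm_orbital_sum_le_thick_thin:
  assumes ab: "0 \<le> a" "a \<le> b" "b \<le> 1" and t: "0 < t" and \<Gamma>: "subgroup_PSL2 \<Gamma>"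
    and z: "Im z > 0" and r: "0 < r" "r < 3" "injrad \<Gamma> > r" and L: "L > 0"
  shows "cmod (infsum (\<lambda>\<gamma>. K_t a b t (hdist z (\<gamma> z))) (\<Gamma> - {id}))
          \<le> orbital_bound t r (2 * L) + (if injrad_at \<Gamma> z < L then orbital_bound t r (2 * r) else 0)"
proof (cases "\<Gamma> - {id} = {}")
  case True
  show ?thesis
    unfolding True using orbital_bound_nonneg[OF t r(1)] by simp
next
  case False
  have displaced: "2 * r < hdist z (\<gamma> z)" "2 * injrad_at \<Gamma> z \<le> hdist z (\<gamma> z)" if "\<gamma> \<in> \<Gamma> - {id}" for \<gamma>
    using injrad_le_injrad_at[OF \<Gamma> False z] injrad_at_le_hdist[OF \<Gamma> z that] r by auto
  show ?thesis
  proof (cases "injrad_at \<Gamma> z < L")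
    case True
    have "2 * r < hdist z (\<gamma> z) \<and> 2 * r \<le> hdist z (\<gamma> z)" if "\<gamma> \<in> \<Gamma> - {id}" for \<gamma>
      using displaced(1)[OF that] by simp
    then have "cmod (infsum (\<lambda>\<gamma>. K_t a b t (hdist z (\<gamma> z))) (\<Gamma> - {id})) \<le> orbital_bound t r (2 * r)"
      using r by (intro norm_orbital_sum_le[OF ab t \<Gamma> z r(1,2)]) auto
    then show ?thesis
      using True orbital_bound_nonneg[OF t r(1)] by (simp add: add_increasing)
  next
    case False
    have "cmod (infsum (\<lambda>\<gamma>. K_t a b t (hdist z (\<gamma> z))) (\<Gamma> - {id})) \<le> orbital_bound t r (2 * L)"
      using displaced L False by (intro norm_orbital_sum_le[OF ab t \<Gamma> z r(1,2)]) force+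
    then show ?thesis
      using False by simp
  qed
qed

lemma norm_R_K_le_thick_thin:
  assumes ab: "0 \<le> a" "a \<le> b" "b \<le> 1" and t: "0 < t" and \<Gamma>: "subgroup_PSL2 \<Gamma>"
    and D: "fundamental_domain \<Gamma> D" and r: "0 < r" "r < 3" "injrad \<Gamma> > r" and L: "L > 0"
  shows "cmod (R_K \<Gamma> D t a b) \<le> orbital_bound t r (2 * L) + orbital_bound t r (2 * r) * (vol_thin \<Gamma> D L / volX D)"
proof -
  define f where "f = (\<lambda>z. infsum (\<lambda>\<gamma>. K_t a b t (hdist z (\<gamma> z))) (\<Gamma> - {id}))"
  define T where "T = {z\<in>D. injrad_at \<Gamma> z < L}"
  have RHS_nonneg: "0 \<le> orbital_bound t r (2 * L) + orbital_bound t r (2 * r) * (vol_thin \<Gamma> D L / volX D)"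
    using orbital_bound_nonneg[OF t r(1)] unfolding vol_thin_def volX_def by simp
  consider (trivial_group) "\<Gamma> - {id} = {}" | (null_area) "volX D = 0" | (main) "\<Gamma> - {id} \<noteq> {}" "volX D > 0"
    using measure_nonneg[of muH D] unfolding volX_def by (metis less_eq_real_def)
  then show ?thesis
  proof cases
    case trivial_group
    show ?thesis
      unfolding R_K_def trivial_group using RHS_nonneg by simp
  next
    case null_area
    \<comment> \<open>Then \<open>R_K\<close> vanishes because \<open>1 / 0 = 0\<close>; this includes \<open>D\<close> of infinite area, whose \<open>measure\<close> is \<open>0\<close>.\<close>
    show ?thesis
      unfolding R_K_def null_area using orbital_bound_nonneg[OF t r(1)] by simp
  next
    case main
    have D_sets: "D \<in> sets muH" "D \<subseteq> Hplane"
      using D unfolding fundamental_domain_def muH_def by auto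
    have "emeasure muH D < \<infinity>"
      using main(2) unfolding volX_def by (metis infinity_ennreal_def less_top measure_def enn2real_top less_irrefl)
    moreover have "T \<in> sets muH" "T \<subseteq> D"
      using thin_part_borel[OF \<Gamma> main(1)] D unfolding T_def fundamental_domain_def muH_def by auto
    moreover have "cmod (f z) \<le> orbital_bound t r (2 * L) + (if z \<in> T then orbital_bound t r (2 * r) else 0)"
      if "z \<in> D" for z
    proof -
      have "Im z > 0"
        using that D_sets(2) by (auto simp: Hplane_def)
      then show ?thesis
        using norm_orbital_sum_le_thick_thin[OF ab t \<Gamma> _ r L] that unfolding f_def T_def by simp
    qed
    ultimately have "cmod (LINT z:D|muH. f z) \<le> orbital_bound t r (2 * L) * volX D + orbital_bound t r (2 * r) * vol_thin \<Gamma> D L"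
      unfolding volX_def vol_thin_def T_def[symmetric]
      using orbital_bound_nonneg[OF t r(1)] by (intro norm_set_integral_le_split D_sets(1)) auto
    then show ?thesis
      unfolding R_K_def f_def[symmetric] norm_mult norm_of_real using main(2)
      by (simp add: field_simps)
  qed
qed

lemma strip_const_le:
  assumes "t \<ge> 1/200"
  shows "strip_const t \<le> exp 20001 * t * exp (12321/8 * t\<^sup>2)"
proof -
  have "1/40000 \<le> t\<^sup>2"
    using power_mono[OF assms, of 2] by (simp add: power2_eq_square)
  then have "1 / (2 * t\<^sup>2) \<le> 20000"
    by (simp add: divide_le_eq)
  then have "exp ((111/2)\<^sup>2 * t\<^sup>2 / 2 + 1 / (2 * t\<^sup>2) + 1) \<le> exp (20001 + 12321/8 * t\<^sup>2)"
    by (simp add: power2_eq_square)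
  then show ?thesis
    unfolding strip_const_def using assms by (simp add: exp_add mult_ac)
qed

text \<open>Since \<open>t \<ge> 1/200\<close>, the Gaussian factor \<open>exp (c * t\<^sup>2)\<close> of \<open>strip_const t\<close> can be traded
  against \<open>exp (- 3 * m / 4)\<close> whenever \<open>m\<close> is a large multiple of \<open>t\<^sup>2\<close>, and \<open>r < 3\<close> is
  absorbed into \<open>t\<^sup>2\<close>.\<close>
lemma orbital_bound_le:
  assumes t: "t \<ge> 1/200" and r: "0 < r" "r < 3" and m: "12321/8 * t\<^sup>2 - 3 * m / 4 \<le> X - t\<^sup>2 / 16"
  shows "orbital_bound t r m \<le> 120000 * 61600 * exp (23/4) * exp 20001 * (t^3 / r^4 * exp (- (t\<^sup>2 / 16))) * exp X"
proof -
  define K :: real where "K = 61600 * exp (23/4) * exp 20001"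
  have "K > 0"
    unfolding K_def by simp
  have "r \<le> 120000 * t\<^sup>2"
    using power_mono[OF t, of 2] r by (simp add: power2_eq_square)
  have "orbital_bound t r m = 61600 * exp (23/4) * (strip_const t * exp (- 3 * m / 4)) / r ^ 3"
    unfolding orbital_bound_def by (simp add: mult_ac)
  also have "\<dots> \<le> 61600 * exp (23/4) * (exp 20001 * t * exp (12321/8 * t\<^sup>2) * exp (- 3 * m / 4)) / r ^ 3"
    using strip_const_le[OF t] r by (intro divide_right_mono mult_left_mono mult_right_mono) auto
  also have "\<dots> = K * t * exp (12321/8 * t\<^sup>2 - 3 * m / 4) / r ^ 3"
    unfolding K_def by (simp add: mult_ac flip: exp_add)
  also have "\<dots> \<le> K * t * exp (X - t\<^sup>2 / 16) / r ^ 3"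
    using m \<open>K > 0\<close> t r by (intro divide_right_mono mult_left_mono) auto
  also have "\<dots> = K * (t * r) * exp (- (t\<^sup>2 / 16)) * exp X / r ^ 4"
  proof -
    have "exp (X - t\<^sup>2 / 16) = exp (- (t\<^sup>2 / 16)) * exp X" "r ^ 4 = r * r ^ 3"
      by (simp_all add: power3_eq_cube power4_eq_xxxx flip: exp_add)
    then show ?thesis
      using r by simp
  qed
  also have "\<dots> \<le> K * (t * (120000 * t\<^sup>2)) * exp (- (t\<^sup>2 / 16)) * exp X / r ^ 4"
    using \<open>r \<le> 120000 * t\<^sup>2\<close> \<open>K > 0\<close> t r by (intro divide_right_mono mult_right_mono mult_left_mono) auto
  also have "\<dots> = 120000 * K * (t^3 / r^4 * exp (- (t\<^sup>2 / 16))) * exp X"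
    by (simp add: power2_eq_square power3_eq_cube)
  finally show ?thesis
    unfolding K_def by (simp add: mult_ac)
qed

lemma thick_thin_bounds_le:
  assumes t: "t \<ge> 1/200" and r: "0 < r" "r < 3" and L: "L \<ge> 2^12 * t\<^sup>2" and "0 \<le> v"
  shows "orbital_bound t r (2 * L) + orbital_bound t r (2 * r) * v
    \<le> 120000 * 61600 * exp (23/4) * exp 20001 * (t^3 / r^4 * exp (- (t\<^sup>2 / 16)) * (exp (- L) + v * exp L))"
proof -
  have "4096 * t\<^sup>2 \<le> L"
    using L by simp
  then have "12321/8 * t\<^sup>2 - 3 * (2 * L) / 4 \<le> - L - t\<^sup>2 / 16" "12321/8 * t\<^sup>2 - 3 * (2 * r) / 4 \<le> L - t\<^sup>2 / 16"
    using r zero_le_power2[of t] by linarith+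
  then have "orbital_bound t r (2 * L) + orbital_bound t r (2 * r) * v
      \<le> 120000 * 61600 * exp (23/4) * exp 20001 * (t^3 / r^4 * exp (- (t\<^sup>2 / 16))) * exp (- L)
        + 120000 * 61600 * exp (23/4) * exp 20001 * (t^3 / r^4 * exp (- (t\<^sup>2 / 16))) * exp L * v"
    using \<open>0 \<le> v\<close> by (intro add_mono mult_right_mono orbital_bound_le[OF t r])
  then show ?thesis
    by (simp add: algebra_simps add_divide_distrib)
qed

lemma exp_neg_sq_le_delta:
  fixes b t :: real
  assumes "0 \<le> b"
  shows "exp (- (t\<^sup>2 / 16)) \<le> exp (- (t\<^sup>2 * (max (1/4 - b) 0)\<^sup>2))"
proof -
  have "(max (1/4 - b) 0)\<^sup>2 \<le> (1/4)\<^sup>2"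
    using assms by (intro power_mono) (auto simp: max_def)
  then have "t\<^sup>2 * (max (1/4 - b) 0)\<^sup>2 \<le> t\<^sup>2 * (1/4)\<^sup>2"
    by (intro mult_left_mono) auto
  then show ?thesis
    by (simp add: power2_eq_square)
qed

theorem lemma3p7:
  shows "\<exists>C::real. \<forall>(\<Gamma>::(complex \<Rightarrow> complex) set) (D::complex set) (a::real) (b::real) (r::real) (t::real) (L::real).
     fuchsian \<Gamma> \<and> cocompact \<Gamma> \<and> fundamental_domain \<Gamma> D \<and>
     0 \<le> a \<and> a \<le> b \<and> b \<le> 1 \<and> 0 < r \<and> r < 3 \<and> injrad \<Gamma> > r \<and>
     t \<ge> 1/200 \<and> L \<ge> 2^12 * t\<^sup>2 \<longrightarrow>
     cmod (R_K \<Gamma> D t a b) \<le>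
       C * (t^3 / r^4 * exp (- (t\<^sup>2 * (max (1/4 - b) 0)\<^sup>2)) *
            (exp (- L) + vol_thin \<Gamma> D L / volX D * exp L))"
proof (intro exI allI impI, elim conjE)
  fix \<Gamma> :: "(complex \<Rightarrow> complex) set" and D :: "complex set" and a b r t L :: real
  assume \<Gamma>: "fuchsian \<Gamma>" and D: "fundamental_domain \<Gamma> D" and ab: "0 \<le> a" "a \<le> b" "b \<le> 1"
    and r: "0 < r" "r < 3" "injrad \<Gamma> > r" and t: "t \<ge> 1/200" and L: "L \<ge> 2^12 * t\<^sup>2"
  define v where "v = vol_thin \<Gamma> D L / volX D"
  have "0 < t" "0 < L" "0 \<le> v"
    using t L unfolding v_def vol_thin_def volX_def by (auto intro: order.strict_trans2[OF _ L])
  have "cmod (R_K \<Gamma> D t a b) \<le> orbital_bound t r (2 * L) + orbital_bound t r (2 * r) * v"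
    using \<Gamma> unfolding fuchsian_def v_def by (intro norm_R_K_le_thick_thin ab \<open>0 < t\<close> D r \<open>0 < L\<close>) auto
  also have "\<dots> \<le> 120000 * 61600 * exp (23/4) * exp 20001 *
      (t^3 / r^4 * exp (- (t\<^sup>2 / 16)) * (exp (- L) + v * exp L))"
    by (rule thick_thin_bounds_le[OF t r(1,2) L \<open>0 \<le> v\<close>])
  also have "\<dots> \<le> 120000 * 61600 * exp (23/4) * exp 20001 *
      (t^3 / r^4 * exp (- (t\<^sup>2 * (max (1/4 - b) 0)\<^sup>2)) * (exp (- L) + v * exp L))"
    using exp_neg_sq_le_delta[of b t] ab r \<open>0 < t\<close> \<open>0 \<le> v\<close>
    by (intro mult_left_mono mult_right_mono) auto
  finally show "cmod (R_K \<Gamma> D t a b) \<le> 120000 * 61600 * exp (23/4) * exp 20001 *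
      (t^3 / r^4 * exp (- (t\<^sup>2 * (max (1/4 - b) 0)\<^sup>2)) * (exp (- L) + vol_thin \<Gamma> D L / volX D * exp L))"
    unfolding v_def .
qed

end
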